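(* Consider the saddle point problem and Algorithm PDS-SPP described in the context, with positive integers $T_k$, positive reals $\beta_k,p_k,q_k^t,\eta_k^t$ and nonnegative reals $\lambda_k,\tau_k,\alpha_k^t$ satisfying: (i) for every $k\ge2$: $\beta_k\tau_k\le\beta_{k-1}(\tau_{k-1}+1)$, $\beta_{k-1}=\beta_k\lambda_k$, $\tilde L\lambda_k\le p_{k-1}\tau_k$, $\beta_kT_{k-1}\alpha_k^1=\beta_{k-1}T_k$, $\alpha_k^1\|\mathcal A\|^2\le\eta_{k-1}^{T_{k-1}}q_k^1$, $\beta_kT_{k-1}q_k^1\le\beta_{k-1}T_kq_{k-1}^{T_{k-1}}$, $\beta_kT_{k-1}(\eta_k^1+p_kT_k)\le\beta_{k-1}T_k(\mu+\eta_{k-1}^{T_{k-1}}+p_{k-1})$; (ii) for every $k\ge1$, $t\ge2$: $\alpha_k^t=1$, $\|\mathcal A\|^2\le\eta_k^{t-1}q_k^t$, $q_k^t\le q_k^{t-1}$, $\eta_k^t\le\mu+\eta_k^{t-1}+p_k$; (iii) $\tau_1=0$, $p_N(\tau_N+1)\ge\tilde L$, $\eta_N^{T_N}q_N^{T_N}\ge\|\mathcal A\|^2$. Then for all $w=(x,y,z)\in\mathcal X\times\mathcal Y\times\mathcal Z$, $$Q(\overline w_N,w)\le\Big(\sum_{k=1}^N\beta_k\Big)^{-1}\beta_1\Big[\frac{q_1^1}{T_1}U(z_0,z)+\Big(\frac{\eta_1^1}{T_1}+p_1\Big)V(x_0,x)\Big].$$ Moreover, in the special case where $\mathcal Z$ is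 a whole vector space with Euclidean norm $|\cdot|=\|\cdot\|_2$, $U(\hat z,z)=\frac12\|z-\hat z\|_2^2$, $h(z)=\langle b,z\rangle$ (so the problem is $\min_{x\in\mathcal X}f(x)$ s.t. $\mathcal Ax=b$), and $z_0=0$, for any saddle point $(x^*,y^*,z^* )$ of the saddle point problem, $$f(\overline x_N)-f(x^* )\le\Big(\sum_{k=1}^N\beta_k\Big)^{-1}\beta_1\Big(\frac{\eta_1^1}{T_1}+p_1\Big)V(x_0,x^* ),$$ $$\|\mathcal A\overline x_N-b\|_2\le\Big(\sum_{k=1}^N\beta_k\Big)^{-1}\beta_1\Big[\frac{q_1^1}{2T_1}(\|z^*\|_2+1)^2+\Big(\frac{\eta_1^1}{T_1}+p_1\Big)V(x_0,x^* )\Big].$$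
   Context: Setting. $\mathcal X$ is a closed convex subset of a finite-dimensional space with norm $\|\cdot\|$ (dual norm $\|\cdot\|_*$); $\mathcal Z$ is a closed convex subset of a finite-dimensional space with norm $|\cdot|$; $\mathcal A$ is a linear operator with $\|\mathcal A\|:=\sup\{\langle\mathcal Ax,z\rangle:\|x\|\le1,|z|\le1\}$; $h:\mathcal Z\to\mathbb R$ convex. $f=\tilde f+\mu\nu$ with $\mu\ge0$, $\nu:\mathcal X\to\mathbb R$ $1$-strongly convex w.r.t. $\|\cdot\|$, $\tilde f$ convex differentiable with $\nabla\tilde f$ $\tilde L$-Lipschitz w.r.t. $\|\cdot\|$. $\tilde f^*$ is the convex conjugate of $\tilde f$ and $\mathcal Y=\mathrm{dom}\,\tilde f^*$. The problem is $\min_{x\in\mathcal X}\max_{y\in\mathcal Y,z\in\mathcal Z}\mu\nu(x)+\langle x,y+\mathcal A^\top z\rangle-\tilde f^*(y)-h(z)$ (equivalently $\min_x\max_z f(x)+\langle\mathcal Ax,z\rangle-h(z)$). $\zeta:\mathcal Z\to\mathbb R$ is $1$-strongly convex w.r.t. $|\cdot|$. Bregman functions (with subgradients $\zeta',\nu',(\tilde f^* )'$): $U(\hat z,z)=\zeta(z)-\zeta(\hat z)-\langle\zeta'(\hat z),z-\hat z\rangle$, $V(\hat x,x)=\nu(x)-\nu(\hat x)-\langle\nu'(\hat x),x-\hat x\rangle$, $W(v,y)=\tilde f^*(y)-\tilde f^*(v)-\langle(\tilde f^* )'(v),y-v\rangle$. Gap function: for $\bar w=(\bar x,\bar y,\bar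 z)$ and $w=(x,y,z)$, $Q(\bar w,w)=[\mu\nu(\bar x)+\langle\bar x,y+\mathcal A^\top z\rangle-\tilde f^*(y)-h(z)]-[\mu\nu(x)+\langle x,\bar y+\mathcal A^\top\bar z\rangle-\tilde f^*(\bar y)-h(\bar z)]$. Algorithm PDS-SPP: choose $x_0\in\mathcal X$, $y_0\in\mathcal Y$, $z_0\in\mathcal Z$, $\hat x_0=x_{-1}=x_0$. For $k=1,\dots,N$: $\tilde x_k=x_{k-1}+\lambda_k(\hat x_{k-1}-x_{k-2})$; $y_k=\arg\min_{y\in\mathcal Y}\langle-\tilde x_k,y\rangle+\tilde f^*(y)+\tau_kW(y_{k-1},y)$; $x_k^0=x_{k-1}$, $z_k^0=z_{k-1}$, $x_k^{-1}=x_{k-1}^{T_{k-1}-1}$ ($x_1^{-1}=x_0$); for $t=1,\dots,T_k$: $\tilde u_k^t=x_k^{t-1}+\alpha_k^t(x_k^{t-1}-x_k^{t-2})$, $z_k^t=\arg\min_{z\in\mathcal Z}h(z)+\langle-\mathcal A\tilde u_k^t,z\rangle+q_k^tU(z_k^{t-1},z)$, $x_k^t=\arg\min_{x\in\mathcal X}\mu\nu(x)+\langle y_k+\mathcal A^\top z_k^t,x\rangle+\eta_k^tV(x_k^{t-1},x)+p_kV(x_{k-1},x)$; $x_k=x_k^{T_k}$, $z_k=z_k^{T_k}$, $\hat x_k=\frac1{T_k}\sum_tx_k^t$, $\hat z_k=\frac1{T_k}\sum_tz_k^t$. Output $\overline w_N=(\overline x_N,\overline y_N,\overline z_N)=(\sum_k\beta_k)^{-1}\sum_k\beta_k(\hat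 x_k,y_k,\hat z_k)$. *)

theory Defs
  imports "HOL-Analysis.Analysis"
begin

definition is_norm :: "('a::real_vector \<Rightarrow> real) \<Rightarrow> bool" where
  "is_norm n \<longleftrightarrow> (\<forall>x. 0 \<le> n x) \<and> (\<forall>x. n x = 0 \<longleftrightarrow> x = 0)
     \<and> (\<forall>c x. n (c *\<^sub>R x) = \<bar>c\<bar> * n x) \<and> (\<forall>x y. n (x + y) \<le> n x + n y)"

text \<open>Dual norm (the dual space is identified with the space itself via the inner product).\<close>
definition dual_norm :: "('a::real_inner \<Rightarrow> real) \<Rightarrow> 'a \<Rightarrow> real" where
  "dual_norm n y = Sup {inner x y | x. n x \<le> 1}"

definition op_norm :: "('a::real_inner \<Rightarrow> real) \<Rightarrow> ('b::real_inner \<Rightarrow> real) \<Rightarrow> ('a \<Rightarrow> 'b) \<Rightarrow> real" where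
  "op_norm nx nz A = Sup {inner (A x) z | x z. nx x \<le> 1 \<and> nz z \<le> 1}"

definition strongly_convex_wrt :: "real \<Rightarrow> ('a::real_vector \<Rightarrow> real) \<Rightarrow> 'a set \<Rightarrow> ('a \<Rightarrow> real) \<Rightarrow> bool" where
  "strongly_convex_wrt m n S g \<longleftrightarrow> (\<forall>x\<in>S. \<forall>y\<in>S. \<forall>\<theta>::real. 0 \<le> \<theta> \<and> \<theta> \<le> 1 \<longrightarrow>
      g (\<theta> *\<^sub>R x + (1 - \<theta>) *\<^sub>R y) \<le> \<theta> * g x + (1 - \<theta>) * g y - m / 2 * \<theta> * (1 - \<theta>) * (n (x - y))\<^sup>2)"

definition is_subgrad_on :: "('a::real_inner \<Rightarrow> real) \<Rightarrow> 'a set \<Rightarrow> 'a \<Rightarrow> 'a \<Rightarrow> bool" where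
  "is_subgrad_on g S x s \<longleftrightarrow> x \<in> S \<and> (\<forall>u\<in>S. g x + inner s (u - x) \<le> g u)"

definition conj_ext :: "('a::real_inner \<Rightarrow> real) \<Rightarrow> 'a \<Rightarrow> ereal" where
  "conj_ext f y = (SUP x. ereal (inner x y - f x))"

definition conj_dom :: "('a::real_inner \<Rightarrow> real) \<Rightarrow> 'a set" where
  "conj_dom f = {y. conj_ext f y < \<infinity>}"

definition conj :: "('a::real_inner \<Rightarrow> real) \<Rightarrow> 'a \<Rightarrow> real" where
  "conj f y = real_of_ereal (conj_ext f y)"

definition breg :: "('a::real_inner \<Rightarrow> real) \<Rightarrow> ('a \<Rightarrow> 'a) \<Rightarrow> 'a \<Rightarrow> 'a \<Rightarrow> real" where
  "breg g g' a b = g b - g a - inner (g' a) (b - a)"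

definition is_argmin_on :: "'a set \<Rightarrow> ('a \<Rightarrow> real) \<Rightarrow> 'a \<Rightarrow> bool" where
  "is_argmin_on S F v \<longleftrightarrow> v \<in> S \<and> (\<forall>u\<in>S. F v \<le> F u)"

definition Lag :: "('a::real_inner \<Rightarrow> 'b::real_inner) \<Rightarrow> real \<Rightarrow> ('a \<Rightarrow> real) \<Rightarrow> ('a \<Rightarrow> real)
     \<Rightarrow> ('b \<Rightarrow> real) \<Rightarrow> 'a \<Rightarrow> 'a \<Rightarrow> 'b \<Rightarrow> real" where
  "Lag A mu nu ft h x y z = mu * nu x + inner x y + inner (A x) z - conj ft y - h z"

definition gapQ :: "('a::real_inner \<Rightarrow> 'b::real_inner) \<Rightarrow> real \<Rightarrow> ('a \<Rightarrow> real) \<Rightarrow> ('a \<Rightarrow> real)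
     \<Rightarrow> ('b \<Rightarrow> real) \<Rightarrow> 'a \<Rightarrow> 'a \<Rightarrow> 'b \<Rightarrow> 'a \<Rightarrow> 'a \<Rightarrow> 'b \<Rightarrow> real" where
  "gapQ A mu nu ft h xb yb zb x y z = Lag A mu nu ft h xb y z - Lag A mu nu ft h x yb zb"

definition xhat :: "(nat \<Rightarrow> nat) \<Rightarrow> (nat \<Rightarrow> 'a::real_vector) \<Rightarrow> (nat \<Rightarrow> nat \<Rightarrow> 'a) \<Rightarrow> nat \<Rightarrow> 'a" where
  "xhat T x xin k = (if k = 0 then x 0 else (1 / real (T k)) *\<^sub>R (\<Sum>t=1..T k. xin k t))"

definition zhat :: "(nat \<Rightarrow> nat) \<Rightarrow> (nat \<Rightarrow> nat \<Rightarrow> 'b::real_vector) \<Rightarrow> nat \<Rightarrow> 'b" where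
  "zhat T zin k = (1 / real (T k)) *\<^sub>R (\<Sum>t=1..T k. zin k t)"

definition wavg :: "(nat \<Rightarrow> real) \<Rightarrow> nat \<Rightarrow> (nat \<Rightarrow> 'a::real_vector) \<Rightarrow> 'a" where
  "wavg beta N v = (1 / (\<Sum>k=1..N. beta k)) *\<^sub>R (\<Sum>k=1..N. beta k *\<^sub>R v k)"

text \<open>tilde x_k = x_{k-1} + lambda_k (hat x_{k-1} - x_{k-2}), with x_{-1} = x_0
  (natural-number subtraction gives x (1 - 2) = x 0).\<close>
definition xtil :: "(nat \<Rightarrow> nat) \<Rightarrow> (nat \<Rightarrow> real) \<Rightarrow> (nat \<Rightarrow> 'a::real_vector) \<Rightarrow> (nat \<Rightarrow> nat \<Rightarrow> 'a) \<Rightarrow> nat \<Rightarrow> 'a" where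
  "xtil T lam x xin k = x (k - 1) + lam k *\<^sub>R (xhat T x xin (k - 1) - x (k - 2))"

text \<open>tilde u_k^t = x_k^{t-1} + alpha_k^t (x_k^{t-1} - x_k^{t-2}) with
  x_k^{-1} = x_{k-1}^{T_{k-1}-1} and x_1^{-1} = x_0.\<close>
definition util :: "(nat \<Rightarrow> nat) \<Rightarrow> (nat \<Rightarrow> nat \<Rightarrow> real) \<Rightarrow> (nat \<Rightarrow> 'a::real_vector) \<Rightarrow> (nat \<Rightarrow> nat \<Rightarrow> 'a) \<Rightarrow> nat \<Rightarrow> nat \<Rightarrow> 'a" where
  "util T alpha x xin k t =
     (let prev2 = (if t = 1 then (if k = 1 then x 0 else xin (k - 1) (T (k - 1) - 1)) else xin k (t - 2))
      in xin k (t - 1) + alpha k t *\<^sub>R (xin k (t - 1) - prev2))"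

definition pds_spp ::
  "'a set \<Rightarrow> 'b set \<Rightarrow> ('a::euclidean_space \<Rightarrow> 'b::euclidean_space) \<Rightarrow> real \<Rightarrow> ('a \<Rightarrow> real) \<Rightarrow> ('a \<Rightarrow> 'a)
   \<Rightarrow> ('a \<Rightarrow> real) \<Rightarrow> ('a \<Rightarrow> 'a) \<Rightarrow> ('b \<Rightarrow> real) \<Rightarrow> ('b \<Rightarrow> real) \<Rightarrow> ('b \<Rightarrow> 'b)
   \<Rightarrow> (nat \<Rightarrow> nat) \<Rightarrow> (nat \<Rightarrow> real) \<Rightarrow> (nat \<Rightarrow> real) \<Rightarrow> (nat \<Rightarrow> nat \<Rightarrow> real) \<Rightarrow> (nat \<Rightarrow> nat \<Rightarrow> real)
   \<Rightarrow> (nat \<Rightarrow> nat \<Rightarrow> real) \<Rightarrow> (nat \<Rightarrow> real) \<Rightarrow> nat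
   \<Rightarrow> (nat \<Rightarrow> 'a) \<Rightarrow> (nat \<Rightarrow> 'a) \<Rightarrow> (nat \<Rightarrow> 'b) \<Rightarrow> (nat \<Rightarrow> nat \<Rightarrow> 'a) \<Rightarrow> (nat \<Rightarrow> nat \<Rightarrow> 'b) \<Rightarrow> bool" where
  "pds_spp X Z A mu nu nu' ft fs' h zeta zeta' T lam tau alpha q eta p N x y z xin zin \<longleftrightarrow>
     (\<forall>k\<in>{1..N}.
        is_argmin_on (conj_dom ft)
          (\<lambda>v. inner (- xtil T lam x xin k) v + conj ft v + tau k * breg (conj ft) fs' (y (k - 1)) v) (y k)
      \<and> xin k 0 = x (k - 1) \<and> zin k 0 = z (k - 1)
      \<and> (\<forall>t\<in>{1..T k}.
           is_argmin_on Z
             (\<lambda>v. h v + inner (- A (util T alpha x xin k t)) v + q k t * breg zeta zeta' (zin k (t - 1)) v) (zin k t)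
         \<and> is_argmin_on X
             (\<lambda>v. mu * nu v + inner (y k) v + inner (A v) (zin k t)
                  + eta k t * breg nu nu' (xin k (t - 1)) v + p k * breg nu nu' (x (k - 1)) v) (xin k t))
      \<and> x k = xin k (T k) \<and> z k = zin k (T k))"

text \<open>Convention on the subgradient selections used in the Bregman distances: they are
  subgradients at every point where they are used, and at a point produced by a prox step
  the selected subgradient is the one certifying the optimality of that step
  (the usual convention making the prox steps well-behaved for nonsmooth prox-functions).\<close>
definition pds_subgrad_convention ::
  "'a set \<Rightarrow> 'b set \<Rightarrow> ('a::euclidean_space \<Rightarrow> 'b::euclidean_space) \<Rightarrow> real \<Rightarrow> ('a \<Rightarrow> real) \<Rightarrow> ('a \<Rightarrow> 'a)
   \<Rightarrow> ('a \<Rightarrow> real) \<Rightarrow> ('a \<Rightarrow> 'a) \<Rightarrow> ('b \<Rightarrow> real) \<Rightarrow> ('b \<Rightarrow> real) \<Rightarrow> ('b \<Rightarrow> 'b)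
   \<Rightarrow> (nat \<Rightarrow> nat) \<Rightarrow> (nat \<Rightarrow> real) \<Rightarrow> (nat \<Rightarrow> real) \<Rightarrow> (nat \<Rightarrow> nat \<Rightarrow> real) \<Rightarrow> (nat \<Rightarrow> nat \<Rightarrow> real)
   \<Rightarrow> (nat \<Rightarrow> nat \<Rightarrow> real) \<Rightarrow> (nat \<Rightarrow> real) \<Rightarrow> nat
   \<Rightarrow> (nat \<Rightarrow> 'a) \<Rightarrow> (nat \<Rightarrow> 'a) \<Rightarrow> (nat \<Rightarrow> 'b) \<Rightarrow> (nat \<Rightarrow> nat \<Rightarrow> 'a) \<Rightarrow> (nat \<Rightarrow> nat \<Rightarrow> 'b) \<Rightarrow> bool" where
  "pds_subgrad_convention X Z A mu nu nu' ft fs' h zeta zeta' T lam tau alpha q eta p N x y z xin zin \<longleftrightarrow>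
     is_subgrad_on nu X (x 0) (nu' (x 0))
   \<and> is_subgrad_on (conj ft) (conj_dom ft) (y 0) (fs' (y 0))
   \<and> is_subgrad_on zeta Z (z 0) (zeta' (z 0))
   \<and> (\<forall>k\<in>{1..N}.
        is_subgrad_on (conj ft) (conj_dom ft) (y k) (fs' (y k))
      \<and> is_argmin_on (conj_dom ft)
          (\<lambda>v. inner (- xtil T lam x xin k + (1 + tau k) *\<^sub>R fs' (y k) - tau k *\<^sub>R fs' (y (k - 1))) v) (y k)
      \<and> (\<forall>t\<in>{1..T k}.
           is_subgrad_on zeta Z (zin k t) (zeta' (zin k t))
         \<and> is_argmin_on Z
             (\<lambda>v. h v + inner (- A (util T alpha x xin k t) + q k t *\<^sub>R (zeta' (zin k t) - zeta' (zin k (t - 1)))) v)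
             (zin k t)
         \<and> is_subgrad_on nu X (xin k t) (nu' (xin k t))
         \<and> is_argmin_on X
             (\<lambda>v. inner ((mu + eta k t + p k) *\<^sub>R nu' (xin k t) + y k
                          - eta k t *\<^sub>R nu' (xin k (t - 1)) - p k *\<^sub>R nu' (x (k - 1))) v
                  + inner (A v) (zin k t))
             (xin k t)))"

end

theory Submission
  imports Defs
begin

(* Every prox step of PDS-SPP yields, through its optimality condition, a three-point
   inequality in the Bregman distances V, U of the x- and z-steps and W of the y-step
   (W is the Bregman distance of f*, which is strongly convex in the dual sense because f is
   L-smooth).  Along the inner loop these inequalities telescope once the extrapolation errors
   <A (x^(t-1) - x^(t-2)), z^t - z^(t-1)> are absorbed by V and U, which is what
   ||A||^2 <= eta q is for.  Weighted by beta_k / T_k and beta_k, condition (i) makes what an outer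
   iteration leaves behind dominate what the next one needs, and (iii) makes the remainder after
   iteration N nonnegative.  The gap is convex in its first argument, so Jensen's inequality over
   both levels of averaging turns the summed bound into the ergodic one.  In the linearly
   constrained case the gap is tested at (x*, grad f(xbar), z) for z = 0 and for z a suitable
   multiple of A xbar - b, and compared with the saddle point inequality. *)

section \<open>Norms, dual norms and operator norms\<close>

lemma is_norm_nonneg: "is_norm n \<Longrightarrow> 0 \<le> n x"
  by (simp add: is_norm_def)

lemma is_norm_eq_0_iff: "is_norm n \<Longrightarrow> n x = 0 \<longleftrightarrow> x = 0"
  by (simp add: is_norm_def)

lemma is_norm_scaleR: "is_norm n \<Longrightarrow> n (c *\<^sub>R x) = \<bar>c\<bar> * n x"
  by (simp add: is_norm_def)

lemma is_norm_triangle: "is_norm n \<Longrightarrow> n (x + y) \<le> n x + n y"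
  by (simp add: is_norm_def)

lemma is_norm_minus_commute: "is_norm n \<Longrightarrow> n (x - y) = n (y - x)"
  using is_norm_scaleR[of n "-1" "x - y"] by simp

lemma is_norm_sum_le:
  assumes "is_norm n" and "finite S"
  shows "n (\<Sum>i\<in>S. f i) \<le> (\<Sum>i\<in>S. n (f i))"
  using assms(2)
proof (induction S rule: finite_induct)
  case empty
  then show ?case using is_norm_eq_0_iff[OF assms(1), of 0] by simp
next
  case (insert i S)
  then show ?case using is_norm_triangle[OF assms(1), of "f i" "sum f S"] by simp
qed

lemma is_norm_le_Basis_sum:
  fixes n :: "'a::euclidean_space \<Rightarrow> real"
  assumes "is_norm n"
  shows "n x \<le> (\<Sum>i\<in>Basis. n i) * norm x"
proof -
  have "n x = n (\<Sum>i\<in>Basis. (x \<bullet> i) *\<^sub>R i)" by (simp add: euclidean_representation)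
  also have "\<dots> \<le> (\<Sum>i\<in>Basis. n ((x \<bullet> i) *\<^sub>R i))" by (rule is_norm_sum_le[OF assms]) simp
  also have "\<dots> = (\<Sum>i\<in>Basis. \<bar>x \<bullet> i\<bar> * n i)" using is_norm_scaleR[OF assms] by simp
  also have "\<dots> \<le> (\<Sum>i\<in>Basis. norm x * n i)"
    by (intro sum_mono mult_right_mono Basis_le_norm is_norm_nonneg[OF assms]) auto
  finally show ?thesis by (simp add: sum_distrib_left mult.commute)
qed

lemma is_norm_lipschitz:
  fixes n :: "'a::euclidean_space \<Rightarrow> real"
  assumes "is_norm n"
  shows "(\<Sum>i\<in>Basis. n i)-lipschitz_on UNIV n"
proof (rule lipschitz_onI)
  fix x y :: 'a
  have "n x \<le> n y + n (x - y)" "n y \<le> n x + n (x - y)"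
    using is_norm_triangle[OF assms, of y "x - y"] is_norm_triangle[OF assms, of x "y - x"]
      is_norm_minus_commute[OF assms, of x y] by simp_all
  then show "dist (n x) (n y) \<le> (\<Sum>i\<in>Basis. n i) * dist x y"
    using is_norm_le_Basis_sum[OF assms, of "x - y"] by (simp add: dist_real_def dist_norm abs_le_iff)
qed (intro sum_nonneg is_norm_nonneg[OF assms])

lemma is_norm_bounded_below:
  fixes n :: "'a::euclidean_space \<Rightarrow> real"
  assumes n: "is_norm n"
  obtains c where "c > 0" and "\<And>x. c * norm x \<le> n x"
proof -
  have "continuous_on (sphere 0 1) n"
    using lipschitz_on_continuous_on[OF is_norm_lipschitz[OF n]] by (rule continuous_on_subset) simp
  then obtain x0 :: 'a where x0: "x0 \<in> sphere 0 1" and min: "\<And>u. u \<in> sphere 0 1 \<Longrightarrow> n x0 \<le> n u"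
    using continuous_attains_inf[OF compact_sphere, of 0 1 n] by auto
  have "x0 \<noteq> 0" using x0 by auto
  then have pos: "n x0 > 0" using is_norm_eq_0_iff[OF n, of x0] is_norm_nonneg[OF n, of x0] by simp
  have "n x0 * norm x \<le> n x" for x
  proof (cases "x = 0")
    case False
    then have "n x0 \<le> n ((1 / norm x) *\<^sub>R x)" by (intro min) simp
    also have "\<dots> = n x / norm x" using is_norm_scaleR[OF n] by simp
    finally show ?thesis using False by (simp add: field_simps)
  qed (use is_norm_eq_0_iff[OF n, of 0] in simp)
  then show thesis using pos that by blast
qed

lemma is_norm_unit_ball_bounded:
  fixes n :: "'a::euclidean_space \<Rightarrow> real"
  assumes "is_norm n"
  obtains C where "\<And>u. n u \<le> 1 \<Longrightarrow> norm u \<le> C"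
proof -
  obtain c where "c > 0" "\<And>x. c * norm x \<le> n x" using is_norm_bounded_below[OF assms] by blast
  then have "norm u \<le> 1 / c" if "n u \<le> 1" for u
    using that order_trans by (fastforce simp: field_simps)
  then show thesis using that by blast
qed

lemma is_norm_normalize:
  assumes "is_norm n" and "n x \<noteq> 0"
  shows "n ((1 / n x) *\<^sub>R x) = 1"
  using assms is_norm_scaleR[OF assms(1)] is_norm_nonneg[OF assms(1), of x] by simp

lemma
  fixes n :: "'a::euclidean_space \<Rightarrow> real"
  assumes n: "is_norm n"
  shows inner_le_dual_norm: "inner x y \<le> dual_norm n y * n x"
    and dual_norm_nonneg: "0 \<le> dual_norm n y"
proof -
  define S where "S = {inner u y | u. n u \<le> 1}"
  obtain C where C: "\<And>u. n u \<le> 1 \<Longrightarrow> norm u \<le> C" using is_norm_unit_ball_bounded[OF n] by blast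
  have "bdd_above S"
  proof (rule bdd_aboveI)
    fix r assume "r \<in> S"
    then obtain u where "r = inner u y" "n u \<le> 1" unfolding S_def by blast
    then show "r \<le> C * norm y"
      using norm_cauchy_schwarz[of u y] C by (meson mult_right_mono norm_ge_zero order_trans)
  qed
  then have le_Sup: "inner u y \<le> dual_norm n y" if "n u \<le> 1" for u
    using that unfolding dual_norm_def S_def by (intro cSup_upper) auto
  show "0 \<le> dual_norm n y" using le_Sup[of 0] is_norm_eq_0_iff[OF n, of 0] by simp
  show "inner x y \<le> dual_norm n y * n x"
  proof (cases "n x = 0")
    case False
    then have "inner ((1 / n x) *\<^sub>R x) y \<le> dual_norm n y"
      by (intro le_Sup) (simp add: is_norm_normalize[OF n])
    then show ?thesis using False is_norm_nonneg[OF n, of x] by (simp add: field_simps)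
  qed (use is_norm_eq_0_iff[OF n, of x] in simp)
qed

lemma
  fixes nx :: "'a::euclidean_space \<Rightarrow> real" and nz :: "'b::euclidean_space \<Rightarrow> real"
  assumes nx: "is_norm nx" and nz: "is_norm nz" and A: "linear A"
  shows inner_le_op_norm: "inner (A x) z \<le> op_norm nx nz A * nx x * nz z"
    and op_norm_nonneg: "0 \<le> op_norm nx nz A"
proof -
  define S where "S = {inner (A u) v | u v. nx u \<le> 1 \<and> nz v \<le> 1}"
  obtain C where C: "\<And>u. nx u \<le> 1 \<Longrightarrow> norm u \<le> C" using is_norm_unit_ball_bounded[OF nx] by blast
  obtain D where D: "\<And>v. nz v \<le> 1 \<Longrightarrow> norm v \<le> D" using is_norm_unit_ball_bounded[OF nz] by blast
  obtain B where B: "\<And>u. norm (A u) \<le> norm u * B" "B > 0"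
    using A bounded_linear.pos_bounded linear_conv_bounded_linear by blast
  have "bdd_above S"
  proof (rule bdd_aboveI)
    fix r assume "r \<in> S"
    then obtain u v where uv: "r = inner (A u) v" "nx u \<le> 1" "nz v \<le> 1" unfolding S_def by blast
    have "inner (A u) v \<le> norm (A u) * norm v" by (rule norm_cauchy_schwarz)
    also have "\<dots> \<le> (C * B) * D"
    proof (rule mult_mono)
      show "norm (A u) \<le> C * B"
        using order_trans[OF B(1)[of u] mult_right_mono[OF C[OF uv(2)] less_imp_le[OF B(2)]]] .
      then show "0 \<le> C * B" using norm_ge_zero order_trans by blast
    qed (use D[OF uv(3)] in simp_all)
    finally show "r \<le> C * B * D" using uv by simp
  qed
  then have le_Sup: "inner (A u) v \<le> op_norm nx nz A" if "nx u \<le> 1" "nz v \<le> 1" for u v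
    using that unfolding op_norm_def S_def by (intro cSup_upper) auto
  show "0 \<le> op_norm nx nz A"
    using le_Sup[of 0 0] is_norm_eq_0_iff[OF nx, of 0] is_norm_eq_0_iff[OF nz, of 0] linear_0[OF A]
    by simp
  show "inner (A x) z \<le> op_norm nx nz A * nx x * nz z"
  proof (cases "nx x = 0 \<or> nz z = 0")
    case True
    then have "inner (A x) z = 0"
      using is_norm_eq_0_iff[OF nx, of x] is_norm_eq_0_iff[OF nz, of z] linear_0[OF A] by auto
    then show ?thesis using True by auto
  next
    case False
    then have "inner (A ((1 / nx x) *\<^sub>R x)) ((1 / nz z) *\<^sub>R z) \<le> op_norm nx nz A"
      by (intro le_Sup) (simp_all add: is_norm_normalize nx nz)
    then show ?thesis
      using False is_norm_nonneg[OF nx, of x] is_norm_nonneg[OF nz, of z] linear_cmul[OF A]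
      by (simp add: field_simps)
  qed
qed

section \<open>Strong convexity and Bregman distances\<close>

lemma is_subgrad_on_mem: "is_subgrad_on g S a s \<Longrightarrow> a \<in> S"
  by (simp add: is_subgrad_on_def)

lemma breg_nonneg: "is_subgrad_on g S a (g' a) \<Longrightarrow> b \<in> S \<Longrightarrow> 0 \<le> breg g g' a b"
  unfolding is_subgrad_on_def breg_def by auto

lemma strongly_convex_imp_convex_on:
  assumes "convex X" and "0 \<le> m" and "strongly_convex_wrt m n X g"
  shows "convex_on X g"
proof (rule convex_onI[OF _ assms(1)])
  fix t :: real and u v assume "0 < t" "t < 1" "u \<in> X" "v \<in> X"
  then have "g (t *\<^sub>R v + (1 - t) *\<^sub>R u) \<le> t * g v + (1 - t) * g u - m / 2 * t * (1 - t) * (n (v - u))\<^sup>2"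
    using assms(3) unfolding strongly_convex_wrt_def by auto
  moreover have "0 \<le> m / 2 * t * (1 - t) * (n (v - u))\<^sup>2" using \<open>0 < t\<close> \<open>t < 1\<close> assms(2) by simp
  ultimately show "g ((1 - t) *\<^sub>R u + t *\<^sub>R v) \<le> (1 - t) * g u + t * g v" by (simp add: add.commute)
qed

lemma breg_ge_strongly_convex:
  assumes X: "convex X" and sc: "strongly_convex_wrt m n X g"
    and a: "is_subgrad_on g X a (g' a)" and b: "b \<in> X"
  shows "m / 2 * (n (b - a))\<^sup>2 \<le> breg g g' a b"
proof (rule field_le_mult_one_interval)
  fix \<theta> :: real assume \<theta>: "0 < \<theta>" "\<theta> < 1"
  define c where "c = (1 - \<theta>) *\<^sub>R b + \<theta> *\<^sub>R a"
  have aX: "a \<in> X" using a by (rule is_subgrad_on_mem)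
  have "c \<in> X" using X aX b \<theta> unfolding c_def by (simp add: convex_def)
  then have "g a + inner (g' a) (c - a) \<le> g c" using a by (simp add: is_subgrad_on_def)
  also have "g c \<le> (1 - \<theta>) * g b + \<theta> * g a - m / 2 * (1 - \<theta>) * \<theta> * (n (b - a))\<^sup>2"
    using sc[unfolded strongly_convex_wrt_def, rule_format, OF b aX, of "1 - \<theta>"] \<theta>
    unfolding c_def by simp
  finally have "(1 - \<theta>) * (\<theta> * (m / 2 * (n (b - a))\<^sup>2)) \<le> (1 - \<theta>) * breg g g' a b"
    unfolding c_def breg_def by (simp add: algebra_simps)
  then show "\<theta> * (m / 2 * (n (b - a))\<^sup>2) \<le> breg g g' a b" using \<theta> by simp
qed

lemma convex_on_breg:
  assumes "convex_on X g"
  shows "convex_on X (breg g g' a)"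
proof -
  have "convex_on X (\<lambda>b. - g a - inner (g' a) (b - a))"
  proof (rule convex_onI)
    fix t :: real and u v
    show "- g a - inner (g' a) ((1 - t) *\<^sub>R u + t *\<^sub>R v - a)
        \<le> (1 - t) * (- g a - inner (g' a) (u - a)) + t * (- g a - inner (g' a) (v - a))"
      by (simp add: inner_add_right inner_diff_right algebra_simps)
  qed (use assms in \<open>simp add: convex_on_def\<close>)
  from convex_on_add[OF assms this] show ?thesis unfolding breg_def by (simp add: algebra_simps)
qed

lemma mult_le_weighted_half_squares:
  fixes a u v E F :: real
  assumes "0 \<le> a" "0 \<le> u" "0 \<le> v" "0 \<le> E" "0 \<le> F" and "a\<^sup>2 \<le> E * F"
  shows "a * u * v \<le> E * (u\<^sup>2 / 2) + F * (v\<^sup>2 / 2)"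
proof (rule power2_le_imp_le)
  have "(a * u * v)\<^sup>2 \<le> (E * F) * (u\<^sup>2 * v\<^sup>2)"
    using mult_right_mono[OF assms(6), of "u\<^sup>2 * v\<^sup>2"] by (simp add: power_mult_distrib mult.assoc)
  also have "\<dots> \<le> (E * (u\<^sup>2 / 2) + F * (v\<^sup>2 / 2))\<^sup>2"
    using sum_squares_ge_zero[of "E * u\<^sup>2 - F * v\<^sup>2" 0] by (simp add: power2_eq_square algebra_simps)
  finally show "(a * u * v)\<^sup>2 \<le> (E * (u\<^sup>2 / 2) + F * (v\<^sup>2 / 2))\<^sup>2" .
qed (use assms in simp)

lemma inner_op_le_breg:
  fixes nx :: "'a::euclidean_space \<Rightarrow> real" and nz :: "'b::euclidean_space \<Rightarrow> real"
  assumes nx: "is_norm nx" and nz: "is_norm nz" and A: "linear A"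
    and X: "convex X" and nu: "strongly_convex_wrt 1 nx X nu"
    and Z: "convex Z" and zeta: "strongly_convex_wrt 1 nz Z zeta"
    and a1: "is_subgrad_on nu X a1 (nu' a1)" and a2: "a2 \<in> X"
    and z1: "is_subgrad_on zeta Z z1 (zeta' z1)" and z2: "z2 \<in> Z"
    and "0 \<le> c" "0 \<le> E" "0 \<le> F" and cEF: "c\<^sup>2 * (op_norm nx nz A)\<^sup>2 \<le> E * F"
  shows "c * inner (A (a2 - a1)) (z2 - z1) \<le> E * breg nu nu' a1 a2 + F * breg zeta zeta' z1 z2"
proof -
  have "c * inner (A (a2 - a1)) (z2 - z1) \<le> (c * op_norm nx nz A) * nx (a2 - a1) * nz (z2 - z1)"
    using inner_le_op_norm[OF nx nz A] \<open>0 \<le> c\<close> by (simp add: mult_left_mono mult.assoc)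
  also have "\<dots> \<le> E * ((nx (a2 - a1))\<^sup>2 / 2) + F * ((nz (z2 - z1))\<^sup>2 / 2)"
    using assms(12-14) cEF op_norm_nonneg[OF nx nz A] is_norm_nonneg[OF nx] is_norm_nonneg[OF nz]
    by (intro mult_le_weighted_half_squares) (simp_all add: power_mult_distrib)
  also have "\<dots> \<le> E * breg nu nu' a1 a2 + F * breg zeta zeta' z1 z2"
    using breg_ge_strongly_convex[where g' = nu', OF X nu a1 a2]
      breg_ge_strongly_convex[where g' = zeta', OF Z zeta z1 z2] assms(13,14)
    by (intro add_mono mult_left_mono) simp_all
  finally show ?thesis .
qed

section \<open>Smooth convex functions and their conjugates\<close>

lemma has_field_derivative_along_line:
  assumes grad: "\<And>u. (f has_derivative (\<lambda>d. inner (g u) d)) (at u)"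
  shows "((\<lambda>t. f (u + t *\<^sub>R d)) has_field_derivative inner (g (u + t *\<^sub>R d)) d) (at t)"
proof -
  have "((\<lambda>t. u + t *\<^sub>R d) has_derivative (\<lambda>s. s *\<^sub>R d)) (at t)"
    by (auto intro!: derivative_eq_intros)
  from has_derivative_compose[OF this grad]
  have "((\<lambda>t. f (u + t *\<^sub>R d)) has_derivative (\<lambda>s. inner (g (u + t *\<^sub>R d)) (s *\<^sub>R d))) (at t)" .
  moreover have "(\<lambda>s. inner (g (u + t *\<^sub>R d)) (s *\<^sub>R d)) = (*) (inner (g (u + t *\<^sub>R d)) d)"
    by (auto simp: fun_eq_iff)
  ultimately show ?thesis unfolding has_field_derivative_def by simp
qed

lemma gradient_inequality:
  assumes convex: "convex_on UNIV f"
    and grad: "\<And>u. (f has_derivative (\<lambda>d. inner (g u) d)) (at u)"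
  shows "f u + inner (g u) (v - u) \<le> f v"
proof -
  define \<phi> where "\<phi> t = f (u + t *\<^sub>R (v - u))" for t :: real
  have "convex_on UNIV \<phi>"
  proof (rule convex_onI)
    fix t a b :: real assume "0 < t" "t < 1"
    have "u + ((1 - t) *\<^sub>R a + t *\<^sub>R b) *\<^sub>R (v - u)
        = (1 - t) *\<^sub>R (u + a *\<^sub>R (v - u)) + t *\<^sub>R (u + b *\<^sub>R (v - u))"
      by (simp add: algebra_simps)
    then show "\<phi> ((1 - t) *\<^sub>R a + t *\<^sub>R b) \<le> (1 - t) * \<phi> a + t * \<phi> b"
      unfolding \<phi>_def using convex_onD[OF convex] \<open>0 < t\<close> \<open>t < 1\<close> by simp
  qed simp
  moreover have "(\<phi> has_field_derivative inner (g u) (v - u)) (at 0 within UNIV)"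
    using has_field_derivative_along_line[OF grad, of u "v - u" 0] unfolding \<phi>_def by simp
  ultimately have "\<phi> 1 - \<phi> 0 \<ge> inner (g u) (v - u) * (1 - 0)"
    by (intro convex_on_imp_above_tangent) auto
  then show ?thesis unfolding \<phi>_def by simp
qed

lemma descent_lemma:
  fixes n :: "'a::euclidean_space \<Rightarrow> real"
  assumes n: "is_norm n"
    and grad: "\<And>u. (f has_derivative (\<lambda>d. inner (g u) d)) (at u)"
    and lip: "\<And>u v. dual_norm n (g u - g v) \<le> L * n (u - v)"
  shows "f (u + d) \<le> f u + inner (g u) d + L / 2 * (n d)\<^sup>2"
proof -
  define \<psi> where "\<psi> t = f (u + t *\<^sub>R d) - t * inner (g u) d - L / 2 * t\<^sup>2 * (n d)\<^sup>2" for t :: real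
  have "\<psi> 1 \<le> \<psi> 0"
  proof (rule DERIV_nonpos_imp_nonincreasing[of 0 1])
    fix t :: real assume t: "0 \<le> t" "t \<le> 1"
    have "inner (g (u + t *\<^sub>R d)) d - inner (g u) d = inner d (g (u + t *\<^sub>R d) - g u)"
      by (simp add: inner_diff_right inner_commute)
    also have "\<dots> \<le> dual_norm n (g (u + t *\<^sub>R d) - g u) * n d" by (rule inner_le_dual_norm[OF n])
    also have "\<dots> \<le> (L * n (t *\<^sub>R d)) * n d"
      using lip[of "u + t *\<^sub>R d" u] is_norm_nonneg[OF n, of d] by (intro mult_right_mono) auto
    also have "\<dots> = L * t * (n d)\<^sup>2" using is_norm_scaleR[OF n, of t d] t by (simp add: power2_eq_square)
    finally have "inner (g (u + t *\<^sub>R d)) d - inner (g u) d - L * t * (n d)\<^sup>2 \<le> 0" by simp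
    moreover have "(\<psi> has_field_derivative
        inner (g (u + t *\<^sub>R d)) d - inner (g u) d - L * t * (n d)\<^sup>2) (at t)"
      unfolding \<psi>_def by (rule derivative_eq_intros has_field_derivative_along_line[OF grad] | simp)+
    ultimately show "\<exists>y. (\<psi> has_field_derivative y) (at t) \<and> y \<le> 0" by blast
  qed simp
  then show ?thesis unfolding \<psi>_def by simp
qed

lemma lipschitz_gradient_const_nonneg:
  fixes n :: "'a::euclidean_space \<Rightarrow> real"
  assumes n: "is_norm n" and lip: "\<And>u v. dual_norm n (g u - g v) \<le> L * n (u - v)"
  shows "0 \<le> L"
proof -
  obtain i :: 'a where "i \<in> Basis" using nonempty_Basis by blast
  then have "n i > 0" using is_norm_eq_0_iff[OF n, of i] is_norm_nonneg[OF n, of i] by auto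
  moreover have "0 \<le> L * n i" using order_trans[OF dual_norm_nonneg[OF n] lip[of i 0]] by simp
  ultimately show ?thesis by (simp add: zero_le_mult_iff)
qed

lemma fenchel_young: "y \<in> conj_dom f \<Longrightarrow> inner x y - f x \<le> conj f y"
proof -
  assume "y \<in> conj_dom f"
  moreover have le: "ereal (inner x y - f x) \<le> conj_ext f y"
    unfolding conj_ext_def by (rule SUP_upper) simp
  ultimately obtain r where "conj_ext f y = ereal r"
    by (cases "conj_ext f y") (auto simp: conj_dom_def)
  then show ?thesis using le by (simp add: conj_def)
qed

lemma
  assumes "\<And>x. inner x y - f x \<le> M"
  shows conj_dom_if_bounded: "y \<in> conj_dom f"
    and conj_le_if_bounded: "conj f y \<le> M"
proof -
  have le: "conj_ext f y \<le> ereal M" unfolding conj_ext_def by (rule SUP_least) (use assms in simp)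
  then show "y \<in> conj_dom f" by (auto simp: conj_dom_def)
  have "ereal (inner 0 y - f 0) \<le> conj_ext f y" unfolding conj_ext_def by (rule SUP_upper) simp
  then obtain r where "conj_ext f y = ereal r" using le by (cases "conj_ext f y") auto
  then show "conj f y \<le> M" using le by (simp add: conj_def)
qed

lemma
  assumes convex: "convex_on UNIV f"
    and grad: "\<And>u. (f has_derivative (\<lambda>d. inner (g u) d)) (at u)"
  shows gradient_in_conj_dom: "g u \<in> conj_dom f"
    and conj_at_gradient: "conj f (g u) = inner u (g u) - f u"
proof -
  have bound: "inner x (g u) - f x \<le> inner u (g u) - f u" for x
    using gradient_inequality[OF convex grad, of u x] by (simp add: inner_diff_right inner_commute)
  show dom: "g u \<in> conj_dom f" by (rule conj_dom_if_bounded[OF bound])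
  show "conj f (g u) = inner u (g u) - f u"
    using conj_le_if_bounded[OF bound] fenchel_young[OF dom, of u] by simp
qed

lemma convex_conj: "convex (conj_dom f)" and convex_on_conj: "convex_on (conj_dom f) (conj f)"
proof -
  have comb: "(1 - t) *\<^sub>R a + t *\<^sub>R b \<in> conj_dom f \<and>
      conj f ((1 - t) *\<^sub>R a + t *\<^sub>R b) \<le> (1 - t) * conj f a + t * conj f b"
    if "0 \<le> t" "t \<le> 1" "a \<in> conj_dom f" "b \<in> conj_dom f" for t a b
  proof -
    have "inner x ((1 - t) *\<^sub>R a + t *\<^sub>R b) - f x \<le> (1 - t) * conj f a + t * conj f b" for x
    proof -
      have "inner x ((1 - t) *\<^sub>R a + t *\<^sub>R b) - f x = (1 - t) * (inner x a - f x) + t * (inner x b - f x)"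
        by (simp add: inner_add_right algebra_simps)
      also have "\<dots> \<le> (1 - t) * conj f a + t * conj f b"
        using fenchel_young[OF that(3), of x] fenchel_young[OF that(4), of x] that(1,2)
        by (intro add_mono mult_left_mono) auto
      finally show ?thesis .
    qed
    then show ?thesis using conj_dom_if_bounded conj_le_if_bounded by blast
  qed
  show "convex (conj_dom f)" unfolding convex_alt using comb by blast
  then show "convex_on (conj_dom f) (conj f)" by (intro convex_onI) (use comb in auto)
qed

lemma gradient_at_conj_subgrad:
  fixes n :: "'a::euclidean_space \<Rightarrow> real"
  assumes n: "is_norm n" and convex: "convex_on UNIV f"
    and grad: "\<And>u. (f has_derivative (\<lambda>d. inner (g u) d)) (at u)"
    and lip: "\<And>u v. dual_norm n (g u - g v) \<le> L * n (u - v)"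
    and sg: "is_subgrad_on (conj f) (conj_dom f) y s"
  shows "g s = y" and "conj f y = inner s y - f s"
proof -
  have y: "y \<in> conj_dom f" using sg by (rule is_subgrad_on_mem)
  have "conj f y + inner s (g s - y) \<le> conj f (g s)"
    using sg gradient_in_conj_dom[OF convex grad] by (simp add: is_subgrad_on_def)
  then have "conj f y \<le> inner s y - f s" using conj_at_gradient[OF convex grad] by (simp add: inner_diff_right)
  then show conj_y: "conj f y = inner s y - f s" using fenchel_young[OF y, of s] by simp
  show "g s = y"
  proof (rule ccontr)
    assume "g s \<noteq> y"
    define e where "e = y - g s"
    have e_pos: "inner e e > 0" using \<open>g s \<noteq> y\<close> unfolding e_def by simp
    define c where "c = L / 2 * (n e)\<^sup>2"
    have small: "inner e e \<le> c * t" if "t > 0" for t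
    proof -
      have "f s + t * inner e y \<le> f (s + t *\<^sub>R e)"
        using fenchel_young[OF y, of "s + t *\<^sub>R e"] conj_y by (simp add: inner_add_left)
      moreover have "f (s + t *\<^sub>R e) \<le> f s + t * inner e (g s) + t * (c * t)"
        using descent_lemma[OF n grad lip, of s "t *\<^sub>R e"] is_norm_scaleR[OF n, of t e] that
        unfolding c_def by (simp add: inner_commute power2_eq_square algebra_simps)
      moreover have "t * inner e (y - g s) = t * inner e y - t * inner e (g s)"
        by (simp add: inner_diff_right algebra_simps)
      ultimately have "t * inner e (y - g s) \<le> t * (c * t)" by linarith
      then show ?thesis using that unfolding e_def by simp
    qed
    define t where "t = inner e e / (2 * (\<bar>c\<bar> + 1))"
    have "t > 0" unfolding t_def using e_pos by (simp add: add_pos_nonneg)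
    moreover have "c * t < inner e e"
    proof -
      have "c * t \<le> \<bar>c\<bar> * t" using \<open>t > 0\<close> by (intro mult_right_mono) auto
      also have "\<dots> < (\<bar>c\<bar> + 1) * t" using \<open>t > 0\<close> by simp
      also have "\<dots> \<le> inner e e" unfolding t_def using e_pos by (simp add: field_simps add_pos_nonneg)
      finally show ?thesis .
    qed
    ultimately show False using small by (meson not_less)
  qed
qed

text \<open>The dual counterpart of the \<open>L\<close>-smoothness of \<open>f\<close>: \<open>f\<^sup>*\<close> is \<open>1/L\<close>-strongly convex.\<close>

lemma conj_breg_ge:
  fixes n :: "'a::euclidean_space \<Rightarrow> real"
  assumes n: "is_norm n" and convex: "convex_on UNIV f"
    and grad: "\<And>u. (f has_derivative (\<lambda>d. inner (g u) d)) (at u)"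
    and lip: "\<And>u v. dual_norm n (g u - g v) \<le> L * n (u - v)"
    and sg: "is_subgrad_on (conj f) (conj_dom f) y1 (f' y1)" and y2: "y2 \<in> conj_dom f"
  shows "inner w (y2 - y1) - L / 2 * (n w)\<^sup>2 \<le> breg (conj f) f' y1 y2"
proof -
  note s = gradient_at_conj_subgrad[OF n convex grad lip sg]
  have "inner (f' y1 + w) y2 - f (f' y1 + w) \<le> conj f y2" by (rule fenchel_young[OF y2])
  moreover have "f (f' y1 + w) \<le> f (f' y1) + inner y1 w + L / 2 * (n w)\<^sup>2"
    using descent_lemma[OF n grad lip, of "f' y1" w] s(1) by simp
  ultimately show ?thesis
    using s(2) unfolding breg_def by (simp add: inner_add_left inner_add_right inner_diff_right inner_commute)
qed

lemma young_quadratic: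
  fixes n :: "'a::real_inner \<Rightarrow> real"
  assumes n: "is_norm n" and W: "\<And>u. inner u v - L / 2 * (n u)\<^sup>2 \<le> W"
    and "0 \<le> L" "0 \<le> a" "0 \<le> b" "0 \<le> c" and abc: "a\<^sup>2 * L \<le> b * c"
  shows "a * inner D v \<le> b * W + c / 2 * (n D)\<^sup>2"
proof (cases "b = 0")
  case False
  then have b: "b > 0" using \<open>0 \<le> b\<close> by simp
  have "inner ((a / b) *\<^sub>R D) v - L / 2 * (n ((a / b) *\<^sub>R D))\<^sup>2 \<le> W" by (rule W)
  then have "b * ((a / b) * inner D v - L / 2 * ((a / b)\<^sup>2 * (n D)\<^sup>2)) \<le> b * W"
    using is_norm_scaleR[OF n, of "a / b" D] \<open>0 \<le> a\<close> b
    by (simp add: power_mult_distrib power_divide mult_left_mono)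
  moreover have "b * ((a / b) * inner D v - L / 2 * ((a / b)\<^sup>2 * (n D)\<^sup>2))
      = a * inner D v - (a\<^sup>2 * L / b) / 2 * (n D)\<^sup>2"
    using b by (simp add: field_simps power2_eq_square)
  moreover have "(a\<^sup>2 * L / b) / 2 * (n D)\<^sup>2 \<le> c / 2 * (n D)\<^sup>2"
    using abc b by (intro mult_right_mono) (auto simp: field_simps)
  ultimately show ?thesis by linarith
next
  case True
  have "a * inner D v \<le> 0"
  proof (cases "a = 0")
    case False
    then have L: "L = 0" using abc True \<open>0 \<le> L\<close> \<open>0 \<le> a\<close> by (simp add: mult_le_0_iff)
    have "inner D v \<le> 0"
    proof (rule ccontr)
      assume "\<not> inner D v \<le> 0"
      then show False using W[of "((\<bar>W\<bar> + 1) / inner D v) *\<^sub>R D"] L by simp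
    qed
    then show ?thesis using \<open>0 \<le> a\<close> by (simp add: mult_nonneg_nonpos)
  qed simp
  moreover have "0 \<le> c / 2 * (n D)\<^sup>2" using \<open>0 \<le> c\<close> by simp
  ultimately show ?thesis using True by simp
qed

lemma inner_le_conj_breg:
  fixes n :: "'a::euclidean_space \<Rightarrow> real"
  assumes n: "is_norm n" and convex: "convex_on UNIV f"
    and grad: "\<And>u. (f has_derivative (\<lambda>d. inner (g u) d)) (at u)"
    and lip: "\<And>u v. dual_norm n (g u - g v) \<le> L * n (u - v)"
    and sg: "is_subgrad_on (conj f) (conj_dom f) y1 (f' y1)" and y2: "y2 \<in> conj_dom f"
    and "0 \<le> a" "0 \<le> b" "0 \<le> c" and "a\<^sup>2 * L \<le> b * c"
  shows "a * inner D (y2 - y1) \<le> b * breg (conj f) f' y1 y2 + c / 2 * (n D)\<^sup>2"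
  using young_quadratic[OF n conj_breg_ge[where f' = f', OF n convex grad lip sg y2]
      lipschitz_gradient_const_nonneg[OF n lip]] assms(7-) by blast

section \<open>Three-point inequalities of the proximal steps\<close>

lemma prox_x_three_point:
  assumes A: "linear A"
    and opt: "is_argmin_on X (\<lambda>v. inner ((mu + e + p) *\<^sub>R nu' u + y - e *\<^sub>R nu' a - p *\<^sub>R nu' b) v
                                + inner (A v) w) u"
    and v: "v \<in> X"
  shows "mu * nu u - mu * nu v + inner (u - v) y + inner (A (u - v)) w
    \<le> e * (breg nu nu' a v - breg nu nu' u v - breg nu nu' a u)
     + p * (breg nu nu' b v - breg nu nu' u v - breg nu nu' b u) - mu * breg nu nu' u v"
proof -
  have "inner ((mu + e + p) *\<^sub>R nu' u + y - e *\<^sub>R nu' a - p *\<^sub>R nu' b) u + inner (A u) w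
     \<le> inner ((mu + e + p) *\<^sub>R nu' u + y - e *\<^sub>R nu' a - p *\<^sub>R nu' b) v + inner (A v) w"
    using opt v unfolding is_argmin_on_def by blast
  then show ?thesis
    by (simp add: breg_def linear_diff[OF A] inner_diff_left inner_diff_right inner_add_left
        inner_add_right algebra_simps inner_commute)
qed

lemma prox_z_three_point:
  assumes opt: "is_argmin_on Z (\<lambda>v. h v + inner (- w + q *\<^sub>R (zeta' u - zeta' a)) v) u"
    and v: "v \<in> Z"
  shows "h u - h v - inner w (u - v)
    \<le> q * (breg zeta zeta' a v - breg zeta zeta' u v - breg zeta zeta' a u)"
proof -
  have "h u + inner (- w + q *\<^sub>R (zeta' u - zeta' a)) u \<le> h v + inner (- w + q *\<^sub>R (zeta' u - zeta' a)) v"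
    using opt v unfolding is_argmin_on_def by blast
  then show ?thesis
    by (simp add: breg_def inner_diff_left inner_diff_right inner_add_left
        inner_add_right algebra_simps inner_commute)
qed

lemma prox_y_three_point:
  assumes opt: "is_argmin_on D (\<lambda>v. inner (- w + (1 + tau) *\<^sub>R g' u - tau *\<^sub>R g' a) v) u"
    and v: "v \<in> D"
  shows "g u - g v - inner w (u - v)
    \<le> tau * (breg g g' a v - breg g g' u v - breg g g' a u) - breg g g' u v"
proof -
  have "inner (- w + (1 + tau) *\<^sub>R g' u - tau *\<^sub>R g' a) u \<le> inner (- w + (1 + tau) *\<^sub>R g' u - tau *\<^sub>R g' a) v"
    using opt v unfolding is_argmin_on_def by blast
  then show ?thesis
    by (simp add: breg_def inner_diff_left inner_diff_right inner_add_left
        inner_add_right algebra_simps inner_commute)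
qed

section \<open>Weighted averages and the gap function\<close>

lemma wavg_eq_convex_combination: "wavg beta N v = (\<Sum>k=1..N. (beta k / (\<Sum>j=1..N. beta j)) *\<^sub>R v k)"
  unfolding wavg_def by (simp add: scaleR_sum_right)

lemma
  assumes C: "convex C" and N: "1 \<le> N"
    and v: "\<And>k. k \<in> {1..N} \<Longrightarrow> v k \<in> C" and beta: "\<And>k. k \<in> {1..N} \<Longrightarrow> 0 < beta k"
  shows wavg_mem: "wavg beta N v \<in> C"
    and convex_on_wavg_le: "convex_on C f \<Longrightarrow>
      f (wavg beta N v) \<le> (1 / (\<Sum>k=1..N. beta k)) * (\<Sum>k=1..N. beta k * f (v k))"
proof -
  define S where "S = (\<Sum>k=1..N. beta k)"
  have "0 < S" unfolding S_def using N beta by (intro sum_pos) auto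
  then have sum1: "(\<Sum>k=1..N. beta k / S) = 1" unfolding S_def by (simp add: sum_divide_distrib[symmetric])
  have nonneg: "\<And>k. k \<in> {1..N} \<Longrightarrow> 0 \<le> beta k / S" using beta \<open>0 < S\<close> by (simp add: less_imp_le)
  show "wavg beta N v \<in> C" unfolding wavg_eq_convex_combination S_def[symmetric]
    by (rule convex_sum[OF _ C sum1 nonneg v]) auto
  assume f: "convex_on C f"
  have "f (wavg beta N v) \<le> (\<Sum>k=1..N. beta k / S * f (v k))"
    unfolding wavg_eq_convex_combination S_def[symmetric]
    by (rule convex_on_sum[OF _ _ f sum1 nonneg v]) (use N in auto)
  then show "f (wavg beta N v) \<le> (1 / (\<Sum>k=1..N. beta k)) * (\<Sum>k=1..N. beta k * f (v k))"
    unfolding S_def by (simp add: sum_distrib_left)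
qed

lemma wavg_Pair: "wavg beta N (\<lambda>k. (u k, v k)) = (wavg beta N u, wavg beta N v)"
  unfolding wavg_def by (simp add: prod_eq_iff fst_sum snd_sum)

lemma wavg_const: "(\<Sum>k=1..N. beta k) \<noteq> 0 \<Longrightarrow> wavg beta N (\<lambda>_. c) = c"
  unfolding wavg_def by (simp add: scaleR_sum_left[symmetric])

lemma xhat_eq_wavg: "k \<noteq> 0 \<Longrightarrow> xhat T x xin k = wavg (\<lambda>_. 1) (T k) (xin k)"
  unfolding xhat_def wavg_def by simp

lemma zhat_eq_wavg: "zhat T zin k = wavg (\<lambda>_. 1) (T k) (zin k)"
  unfolding zhat_def wavg_def by simp

lemma convex_on_gapQ:
  assumes nu: "convex_on X nu" and mu: "0 \<le> mu" and A: "linear A" and h: "convex_on Z h"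
  shows "convex_on (X \<times> conj_dom f \<times> Z) (\<lambda>(a, b, c). gapQ A mu nu f h a b c xx yy zz)"
proof (rule convex_onI)
  show "convex (X \<times> conj_dom f \<times> Z)"
    using nu h convex_conj by (intro convex_Times) (auto simp: convex_on_def)
  fix t :: real and w1 w2 assume t: "0 < t" "t < 1" and w: "w1 \<in> X \<times> conj_dom f \<times> Z" "w2 \<in> X \<times> conj_dom f \<times> Z"
  obtain a1 b1 c1 a2 b2 c2 where w12: "w1 = (a1, b1, c1)" "w2 = (a2, b2, c2)" by (cases w1, cases w2) auto
  have "mu * nu ((1 - t) *\<^sub>R a1 + t *\<^sub>R a2) \<le> mu * ((1 - t) * nu a1 + t * nu a2)"
    using convex_onD[OF nu, of t a1 a2] w t mu unfolding w12 by (intro mult_left_mono) auto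
  moreover have "conj f ((1 - t) *\<^sub>R b1 + t *\<^sub>R b2) \<le> (1 - t) * conj f b1 + t * conj f b2"
    using convex_onD[OF convex_on_conj[of f], of t b1 b2] w t unfolding w12 by auto
  moreover have "h ((1 - t) *\<^sub>R c1 + t *\<^sub>R c2) \<le> (1 - t) * h c1 + t * h c2"
    using convex_onD[OF h, of t c1 c2] w t unfolding w12 by auto
  ultimately show "(\<lambda>(a, b, c). gapQ A mu nu f h a b c xx yy zz) ((1 - t) *\<^sub>R w1 + t *\<^sub>R w2)
      \<le> (1 - t) * (\<lambda>(a, b, c). gapQ A mu nu f h a b c xx yy zz) w1
        + t * (\<lambda>(a, b, c). gapQ A mu nu f h a b c xx yy zz) w2"
    unfolding w12 gapQ_def Lag_def
    by (simp add: linear_add[OF A] linear_diff[OF A] linear_cmul[OF A] inner_add_left inner_add_right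
        inner_diff_left inner_diff_right algebra_simps)
qed

section \<open>Saddle points of the linearly constrained problem\<close>

lemma penalized_bounds:
  fixes r zs :: "'b::real_inner"
  assumes bound: "\<And>z. \<delta> + inner r z \<le> B * (c * ((norm z)\<^sup>2 / 2) + V)"
    and lower: "- (norm zs * norm r) \<le> \<delta>" and "0 \<le> B" "0 \<le> c"
  shows "\<delta> \<le> B * V" and "norm r \<le> B * (c / 2 * (norm zs + 1)\<^sup>2 + V)"
proof -
  show "\<delta> \<le> B * V" using bound[of 0] by simp
  define z where "z = ((norm zs + 1) / norm r) *\<^sub>R r"
  have "inner r z = (norm zs + 1) * norm r"
    unfolding z_def by (cases "r = 0") (simp_all add: power2_norm_eq_inner[symmetric] power2_eq_square)
  moreover have "norm z \<le> norm zs + 1" unfolding z_def by (cases "r = 0") simp_all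
  then have "B * (c * ((norm z)\<^sup>2 / 2) + V) \<le> B * (c * ((norm zs + 1)\<^sup>2 / 2) + V)"
    using assms(3,4) by (intro mult_left_mono add_right_mono power_mono) auto
  ultimately show "norm r \<le> B * (c / 2 * (norm zs + 1)\<^sup>2 + V)"
    using bound[of z] lower by (simp add: algebra_simps)
qed

context
  fixes A :: "'a::real_inner \<Rightarrow> 'b::real_inner" and b :: 'b
    and mu :: real and nu :: "'a \<Rightarrow> real" and f :: "'a \<Rightarrow> real"
begin

lemma Lag_linear:
  "Lag A mu nu f (inner b) x y z = mu * nu x + (inner x y - conj f y) + inner (A x - b) z"
  unfolding Lag_def by (simp add: inner_diff_left inner_diff_right inner_commute)

lemma Lag_le_primal:
  "y \<in> conj_dom f \<Longrightarrow> Lag A mu nu f (inner b) x y z \<le> f x + mu * nu x + inner (A x - b) z"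
  using fenchel_young[of y f x] unfolding Lag_linear by simp

lemma Lag_at_gradient:
  assumes "convex_on UNIV f" and "\<And>u. (f has_derivative (\<lambda>d. inner (g u) d)) (at u)"
  shows "Lag A mu nu f (inner b) x (g x) z = f x + mu * nu x + inner (A x - b) z"
  unfolding Lag_linear conj_at_gradient[OF assms] by simp

lemma saddle_point_feasible:
  assumes "\<And>zz. Lag A mu nu f (inner b) xs ys zz \<le> Lag A mu nu f (inner b) xs ys zs"
  shows "A xs = b"
proof (rule ccontr)
  assume "A xs \<noteq> b"
  then have pos: "inner (A xs - b) (A xs - b) > 0" by simp
  define m where "m = (\<bar>inner (A xs - b) zs\<bar> + 1) / inner (A xs - b) (A xs - b)"
  have "Lag A mu nu f (inner b) xs ys (m *\<^sub>R (A xs - b)) \<le> Lag A mu nu f (inner b) xs ys zs"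
    by (rule assms)
  then have "m * inner (A xs - b) (A xs - b) \<le> inner (A xs - b) zs" unfolding Lag_linear by simp
  then show False using pos unfolding m_def by simp
qed

lemma saddle_point_primal_le:
  assumes f: "convex_on UNIV f" "\<And>u. (f has_derivative (\<lambda>d. inner (g u) d)) (at u)"
    and ys: "ys \<in> conj_dom f" and xb: "xb \<in> X"
    and max: "\<And>yy zz. yy \<in> conj_dom f \<Longrightarrow> Lag A mu nu f (inner b) xs yy zz \<le> Lag A mu nu f (inner b) xs ys zs"
    and min: "\<And>xx. xx \<in> X \<Longrightarrow> Lag A mu nu f (inner b) xs ys zs \<le> Lag A mu nu f (inner b) xx ys zs"
  shows "f xs + mu * nu xs \<le> f xb + mu * nu xb + inner (A xb - b) zs"
proof -
  have "A xs = b" by (rule saddle_point_feasible[OF max[OF ys]])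
  have "f xs + mu * nu xs + inner (A xs - b) zs = Lag A mu nu f (inner b) xs (g xs) zs"
    by (rule Lag_at_gradient[OF f, symmetric])
  also have "\<dots> \<le> Lag A mu nu f (inner b) xs ys zs" by (rule max[OF gradient_in_conj_dom[OF f]])
  also have "\<dots> \<le> Lag A mu nu f (inner b) xb ys zs" by (rule min[OF xb])
  also have "\<dots> \<le> f xb + mu * nu xb + inner (A xb - b) zs" by (rule Lag_le_primal[OF ys])
  finally show ?thesis using \<open>A xs = b\<close> by simp
qed

lemma saddle_point_rates:
  assumes f: "convex_on UNIV f" "\<And>u. (f has_derivative (\<lambda>d. inner (g u) d)) (at u)"
    and gap: "\<And>zz. gapQ A mu nu f (inner b) xb yb zb xs (g xb) zz \<le> B * (c * ((norm zz)\<^sup>2 / 2) + V)"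
    and xb: "xb \<in> X" and yb: "yb \<in> conj_dom f" and ys: "ys \<in> conj_dom f"
    and max: "\<And>yy zz. yy \<in> conj_dom f \<Longrightarrow> Lag A mu nu f (inner b) xs yy zz \<le> Lag A mu nu f (inner b) xs ys zs"
    and min: "\<And>xx. xx \<in> X \<Longrightarrow> Lag A mu nu f (inner b) xs ys zs \<le> Lag A mu nu f (inner b) xx ys zs"
    and "0 \<le> B" "0 \<le> c"
  shows "f xb + mu * nu xb - (f xs + mu * nu xs) \<le> B * V"
    and "norm (A xb - b) \<le> B * (c / 2 * (norm zs + 1)\<^sup>2 + V)"
proof -
  have "A xs = b" by (rule saddle_point_feasible[OF max[OF ys]])
  have penalized: "(f xb + mu * nu xb - (f xs + mu * nu xs)) + inner (A xb - b) zz
      \<le> B * (c * ((norm zz)\<^sup>2 / 2) + V)" for zz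
    using gap[of zz] Lag_at_gradient[OF f, of xb] Lag_le_primal[OF yb, of xs zb] \<open>A xs = b\<close>
    unfolding gapQ_def by simp
  have "- (norm zs * norm (A xb - b)) \<le> f xb + mu * nu xb - (f xs + mu * nu xs)"
    using saddle_point_primal_le[OF f ys xb max min] norm_cauchy_schwarz[of "A xb - b" zs]
    by (simp add: mult.commute)
  from penalized_bounds[OF penalized this \<open>0 \<le> B\<close> \<open>0 \<le> c\<close>]
  show "f xb + mu * nu xb - (f xs + mu * nu xs) \<le> B * V"
    and "norm (A xb - b) \<le> B * (c / 2 * (norm zs + 1)\<^sup>2 + V)" .
qed

end

section \<open>A run of PDS-SPP\<close>

lemma sum_le_telescope:
  fixes a \<Phi> :: "nat \<Rightarrow> real"
  assumes "1 \<le> n" and first: "a 1 \<le> \<Phi> 1"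
    and step: "\<And>t. t \<in> {2..n} \<Longrightarrow> a t \<le> \<Phi> t - \<Phi> (t - 1)"
  shows "(\<Sum>t=1..n. a t) \<le> \<Phi> n"
  using assms(1) step
proof (induction n)
  case (Suc n)
  show ?case
  proof (cases "n = 0")
    case False
    then have "(\<Sum>t=1..n. a t) \<le> \<Phi> n" using Suc.IH Suc.prems(2) by simp
    moreover have "a (Suc n) \<le> \<Phi> (Suc n) - \<Phi> n" using Suc.prems(2)[of "Suc n"] False by simp
    ultimately show ?thesis by simp
  qed (use first in simp)
qed simp

locale pds_spp_run =
  fixes X :: "'a::euclidean_space set" and Z :: "'b::euclidean_space set"
    and nx :: "'a \<Rightarrow> real" and nz :: "'b \<Rightarrow> real"
    and A :: "'a \<Rightarrow> 'b" and h :: "'b \<Rightarrow> real"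
    and mu :: real and nu :: "'a \<Rightarrow> real" and nu' :: "'a \<Rightarrow> 'a"
    and ft :: "'a \<Rightarrow> real" and gft :: "'a \<Rightarrow> 'a" and L :: real and fs' :: "'a \<Rightarrow> 'a"
    and zeta :: "'b \<Rightarrow> real" and zeta' :: "'b \<Rightarrow> 'b"
    and T :: "nat \<Rightarrow> nat" and beta p lam tau :: "nat \<Rightarrow> real"
    and q eta alpha :: "nat \<Rightarrow> nat \<Rightarrow> real" and N :: nat
    and x y :: "nat \<Rightarrow> 'a" and z :: "nat \<Rightarrow> 'b"
    and xin :: "nat \<Rightarrow> nat \<Rightarrow> 'a" and zin :: "nat \<Rightarrow> nat \<Rightarrow> 'b"
  assumes convex_X: "convex X" and convex_Z: "convex Z"
    and norm_x: "is_norm nx" and norm_z: "is_norm nz"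
    and linear_A: "linear A" and convex_h: "convex_on Z h" and mu_nonneg: "0 \<le> mu"
    and nu_strongly_convex: "strongly_convex_wrt 1 nx X nu"
    and ft_convex: "convex_on UNIV ft"
    and ft_grad: "\<And>u. (ft has_derivative (\<lambda>d. inner (gft u) d)) (at u)"
    and ft_lip: "\<And>u v. dual_norm nx (gft u - gft v) \<le> L * nx (u - v)"
    and zeta_strongly_convex: "strongly_convex_wrt 1 nz Z zeta"
    and N: "1 \<le> N"
    and pos: "\<And>k. k \<in> {1..N} \<Longrightarrow> 0 < T k \<and> 0 < beta k \<and> 0 < p k \<and> 0 \<le> lam k \<and> 0 \<le> tau k"
    and pos_t: "\<And>k t. k \<in> {1..N} \<Longrightarrow> t \<in> {1..T k} \<Longrightarrow> 0 < q k t \<and> 0 < eta k t \<and> 0 \<le> alpha k t"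
    and cond_i: "\<And>k. k \<in> {2..N} \<Longrightarrow>
         beta k * tau k \<le> beta (k - 1) * (tau (k - 1) + 1)
       \<and> beta (k - 1) = beta k * lam k
       \<and> L * lam k \<le> p (k - 1) * tau k
       \<and> beta k * real (T (k - 1)) * alpha k 1 = beta (k - 1) * real (T k)
       \<and> alpha k 1 * (op_norm nx nz A)\<^sup>2 \<le> eta (k - 1) (T (k - 1)) * q k 1
       \<and> beta k * real (T (k - 1)) * q k 1 \<le> beta (k - 1) * real (T k) * q (k - 1) (T (k - 1))
       \<and> beta k * real (T (k - 1)) * (eta k 1 + p k * real (T k))
           \<le> beta (k - 1) * real (T k) * (mu + eta (k - 1) (T (k - 1)) + p (k - 1))"
    and cond_ii: "\<And>k t. k \<in> {1..N} \<Longrightarrow> t \<in> {2..T k} \<Longrightarrow>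
         alpha k t = 1
       \<and> (op_norm nx nz A)\<^sup>2 \<le> eta k (t - 1) * q k t
       \<and> q k t \<le> q k (t - 1)
       \<and> eta k t \<le> mu + eta k (t - 1) + p k"
    and cond_iii: "tau 1 = 0" "L \<le> p N * (tau N + 1)" "(op_norm nx nz A)\<^sup>2 \<le> eta N (T N) * q N (T N)"
    and alg: "pds_spp X Z A mu nu nu' ft fs' h zeta zeta' T lam tau alpha q eta p N x y z xin zin"
    and sg: "pds_subgrad_convention X Z A mu nu nu' ft fs' h zeta zeta' T lam tau alpha q eta p N x y z xin zin"
begin

abbreviation "V \<equiv> breg nu nu'"
abbreviation "U \<equiv> breg zeta zeta'"
abbreviation "W \<equiv> breg (conj ft) fs'"

lemma T_pos: "k \<in> {1..N} \<Longrightarrow> 1 \<le> T k"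
  using pos by (simp add: Suc_le_eq)

lemma
  assumes "k \<in> {1..N}"
  shows xin_0: "xin k 0 = x (k - 1)" and zin_0: "zin k 0 = z (k - 1)"
    and x_last: "x k = xin k (T k)" and z_last: "z k = zin k (T k)"
  using alg assms unfolding pds_spp_def by blast+

lemma y_opt: "k \<in> {1..N} \<Longrightarrow> is_argmin_on (conj_dom ft)
    (\<lambda>v. inner (- xtil T lam x xin k + (1 + tau k) *\<^sub>R fs' (y k) - tau k *\<^sub>R fs' (y (k - 1))) v) (y k)"
  using sg unfolding pds_subgrad_convention_def by blast

lemma z_opt: "k \<in> {1..N} \<Longrightarrow> t \<in> {1..T k} \<Longrightarrow> is_argmin_on Z
    (\<lambda>v. h v + inner (- A (util T alpha x xin k t) + q k t *\<^sub>R (zeta' (zin k t) - zeta' (zin k (t - 1)))) v)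
    (zin k t)"
  using sg unfolding pds_subgrad_convention_def by blast

lemma x_opt: "k \<in> {1..N} \<Longrightarrow> t \<in> {1..T k} \<Longrightarrow> is_argmin_on X
    (\<lambda>v. inner ((mu + eta k t + p k) *\<^sub>R nu' (xin k t) + y k
                 - eta k t *\<^sub>R nu' (xin k (t - 1)) - p k *\<^sub>R nu' (x (k - 1))) v
         + inner (A v) (zin k t))
    (xin k t)"
  using sg unfolding pds_subgrad_convention_def by blast

lemma y_subgrad: "k \<le> N \<Longrightarrow> is_subgrad_on (conj ft) (conj_dom ft) (y k) (fs' (y k))"
  using sg unfolding pds_subgrad_convention_def by (cases "k = 0") auto

lemma x_subgrad: "k \<le> N \<Longrightarrow> is_subgrad_on nu X (x k) (nu' (x k))"
  using sg T_pos[of k] x_last[of k] unfolding pds_subgrad_convention_def by (cases "k = 0") auto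

lemma z_subgrad: "k \<le> N \<Longrightarrow> is_subgrad_on zeta Z (z k) (zeta' (z k))"
  using sg T_pos[of k] z_last[of k] unfolding pds_subgrad_convention_def by (cases "k = 0") auto

lemma xin_subgrad: "k \<in> {1..N} \<Longrightarrow> t \<le> T k \<Longrightarrow> is_subgrad_on nu X (xin k t) (nu' (xin k t))"
  using sg x_subgrad[of "k - 1"] xin_0[of k] unfolding pds_subgrad_convention_def
  by (cases "t = 0") auto

lemma zin_subgrad: "k \<in> {1..N} \<Longrightarrow> t \<le> T k \<Longrightarrow> is_subgrad_on zeta Z (zin k t) (zeta' (zin k t))"
  using sg z_subgrad[of "k - 1"] zin_0[of k] unfolding pds_subgrad_convention_def
  by (cases "t = 0") auto

text \<open>\<open>xin_prev k s\<close> is the paper's x_k^(s-1), with the conventions x_k^(-1) = x_(k-1)^(T_(k-1)-1)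
  and x_1^(-1) = x_0.\<close>

definition xin_prev :: "nat \<Rightarrow> nat \<Rightarrow> 'a" where
  "xin_prev k s = (if s = 0 then (if k = 1 then x 0 else xin (k - 1) (T (k - 1) - 1)) else xin k (s - 1))"

lemma xin_prev_Suc [simp]: "xin_prev k (Suc s) = xin k s"
  by (simp add: xin_prev_def)

lemma util_eq: "1 \<le> t \<Longrightarrow>
    util T alpha x xin k t = xin k (t - 1) + alpha k t *\<^sub>R (xin k (t - 1) - xin_prev k (t - 1))"
  unfolding util_def xin_prev_def Let_def by (cases "t = 1") (auto simp: numeral_2_eq_2 diff_diff_add)

lemma xin_prev_subgrad:
  assumes k: "k \<in> {1..N}" and s: "s \<le> T k"
  shows "is_subgrad_on nu X (xin_prev k s) (nu' (xin_prev k s))"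
proof (cases "s = 0")
  case True
  show ?thesis
  proof (cases "k = 1")
    case False
    then have "k - 1 \<in> {1..N}" using k by auto
    then show ?thesis using xin_subgrad[of "k - 1" "T (k - 1) - 1"] True False by (simp add: xin_prev_def)
  qed (use x_subgrad[of 0] True in \<open>simp add: xin_prev_def\<close>)
qed (use xin_subgrad[OF k, of "s - 1"] s in \<open>simp add: xin_prev_def\<close>)

lemma xin_prev_0:
  assumes k: "k \<in> {2..N}"
  shows "xin_prev k 0 = xin_prev (k - 1) (T (k - 1))" and "xin k 0 = xin (k - 1) (T (k - 1))"
    and "zin k 0 = zin (k - 1) (T (k - 1))"
proof -
  have k1: "k \<in> {1..N}" and k': "k - 1 \<in> {1..N}" using k by auto
  show "xin_prev k 0 = xin_prev (k - 1) (T (k - 1))"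
    using k T_pos[OF k'] by (simp add: xin_prev_def)
  show "xin k 0 = xin (k - 1) (T (k - 1))" using xin_0[OF k1] x_last[OF k'] by simp
  show "zin k 0 = zin (k - 1) (T (k - 1))" using zin_0[OF k1] z_last[OF k'] by simp
qed

definition extrapolation_error :: "nat \<Rightarrow> nat \<Rightarrow> real" where
  "extrapolation_error k t = inner (A (xin k (t - 1) - xin_prev k (t - 1))) (zin k t - zin k (t - 1))"

lemma extrapolation_error_le:
  assumes k: "k \<in> {1..N}" and t: "t \<in> {2..T k}"
  shows "extrapolation_error k t
    \<le> eta k (t - 1) * V (xin_prev k (t - 1)) (xin k (t - 1)) + q k t * U (zin k (t - 1)) (zin k t)"
proof -
  have "1 * inner (A (xin k (t - 1) - xin_prev k (t - 1))) (zin k t - zin k (t - 1))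
      \<le> eta k (t - 1) * V (xin_prev k (t - 1)) (xin k (t - 1)) + q k t * U (zin k (t - 1)) (zin k t)"
  proof (rule inner_op_le_breg[OF norm_x norm_z linear_A convex_X nu_strongly_convex convex_Z
        zeta_strongly_convex])
    show "is_subgrad_on nu X (xin_prev k (t - 1)) (nu' (xin_prev k (t - 1)))"
      using t by (intro xin_prev_subgrad[OF k]) auto
    show "xin k (t - 1) \<in> X" using t by (intro is_subgrad_on_mem[OF xin_subgrad[OF k]]) auto
    show "is_subgrad_on zeta Z (zin k (t - 1)) (zeta' (zin k (t - 1)))"
      using t by (intro zin_subgrad[OF k]) auto
    show "zin k t \<in> Z" using t by (intro is_subgrad_on_mem[OF zin_subgrad[OF k]]) auto
    have "t - 1 \<in> {1..T k}" "t \<in> {1..T k}" using t by auto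
    then show "0 \<le> eta k (t - 1)" "0 \<le> q k t" using pos_t[OF k] by (simp_all add: less_imp_le)
    show "1\<^sup>2 * (op_norm nx nz A)\<^sup>2 \<le> eta k (t - 1) * q k t" using cond_ii[OF k t] by simp
  qed simp
  then show ?thesis unfolding extrapolation_error_def by simp
qed

lemma extrapolation_error_first_le:
  assumes k: "k \<in> {2..N}"
  shows "alpha k 1 * extrapolation_error k 1 - q k 1 * U (zin k 0) (zin k 1)
    \<le> alpha k 1 * eta (k - 1) (T (k - 1)) * V (xin_prev (k - 1) (T (k - 1))) (xin (k - 1) (T (k - 1)))"
proof -
  have k1: "k \<in> {1..N}" and k': "k - 1 \<in> {1..N}" using k by auto
  have "alpha k 1 * inner (A (xin k 0 - xin_prev k 0)) (zin k 1 - zin k 0)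
      \<le> (alpha k 1 * eta (k - 1) (T (k - 1))) * V (xin_prev k 0) (xin k 0) + q k 1 * U (zin k 0) (zin k 1)"
  proof (rule inner_op_le_breg[OF norm_x norm_z linear_A convex_X nu_strongly_convex convex_Z
        zeta_strongly_convex])
    show "is_subgrad_on nu X (xin_prev k 0) (nu' (xin_prev k 0))" by (rule xin_prev_subgrad[OF k1]) simp
    show "xin k 0 \<in> X" by (rule is_subgrad_on_mem[OF xin_subgrad[OF k1]]) simp
    show "is_subgrad_on zeta Z (zin k 0) (zeta' (zin k 0))" by (rule zin_subgrad[OF k1]) simp
    show "zin k 1 \<in> Z" by (rule is_subgrad_on_mem[OF zin_subgrad[OF k1]]) (use T_pos[OF k1] in simp)
    have "0 \<le> alpha k 1" "0 \<le> eta (k - 1) (T (k - 1))" "0 \<le> q k 1"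
      using pos_t[OF k1, of 1] pos_t[OF k', of "T (k - 1)"] T_pos[OF k1] T_pos[OF k'] by auto
    then show "0 \<le> alpha k 1" "0 \<le> alpha k 1 * eta (k - 1) (T (k - 1))" "0 \<le> q k 1" by simp_all
    have "alpha k 1 * (op_norm nx nz A)\<^sup>2 \<le> eta (k - 1) (T (k - 1)) * q k 1" using cond_i[OF k] by simp
    from mult_left_mono[OF this \<open>0 \<le> alpha k 1\<close>]
    show "(alpha k 1)\<^sup>2 * (op_norm nx nz A)\<^sup>2 \<le> alpha k 1 * eta (k - 1) (T (k - 1)) * q k 1"
      by (simp add: power2_eq_square algebra_simps)
  qed
  then show ?thesis using xin_prev_0[OF k] unfolding extrapolation_error_def by simp
qed

lemma extrapolation_error_first_1: "extrapolation_error 1 1 = 0"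
  using xin_0[of 1] N linear_0[OF linear_A] unfolding extrapolation_error_def xin_prev_def by simp

definition dx :: "nat \<Rightarrow> 'a" where
  "dx k = xhat T x xin k - x (k - 1)"

lemma dx_0: "dx 0 = 0"
  by (simp add: dx_def xhat_def)

lemma xhat_mem:
  assumes k: "k \<in> {1..N}"
  shows "xhat T x xin k \<in> X"
proof -
  have "wavg (\<lambda>_. 1) (T k) (xin k) \<in> X"
    using T_pos[OF k] by (intro wavg_mem[OF convex_X] is_subgrad_on_mem[OF xin_subgrad[OF k]]) auto
  then show ?thesis using k by (simp add: xhat_eq_wavg)
qed

lemma dx_sq_le:
  assumes k: "k \<in> {1..N}"
  shows "(nx (dx k))\<^sup>2 / 2 \<le> (\<Sum>t=1..T k. V (x (k - 1)) (xin k t)) / real (T k)"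
proof -
  have convex_V: "convex_on X (V (x (k - 1)))"
    by (rule convex_on_breg[OF strongly_convex_imp_convex_on[OF convex_X _ nu_strongly_convex]]) simp
  have pos_k: "k \<noteq> 0" using k by simp
  have "1 / 2 * (nx (dx k))\<^sup>2 \<le> V (x (k - 1)) (xhat T x xin k)"
    unfolding dx_def using k
    by (intro breg_ge_strongly_convex[where g' = nu', OF convex_X nu_strongly_convex x_subgrad xhat_mem]) auto
  also have "\<dots> \<le> (1 / (\<Sum>t=1..T k. 1)) * (\<Sum>t=1..T k. 1 * V (x (k - 1)) (xin k t))"
    using k T_pos[OF k] unfolding xhat_eq_wavg[of k, OF pos_k]
    by (intro convex_on_wavg_le[OF convex_X] convex_V is_subgrad_on_mem[OF xin_subgrad]) auto
  finally show ?thesis by simp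
qed

lemma zhat_mem:
  assumes k: "k \<in> {1..N}"
  shows "zhat T zin k \<in> Z"
  unfolding zhat_eq_wavg
  using T_pos[OF k] by (intro wavg_mem[OF convex_Z] is_subgrad_on_mem[OF zin_subgrad[OF k]]) auto

lemma y_mem: "k \<le> N \<Longrightarrow> y k \<in> conj_dom ft"
  by (rule is_subgrad_on_mem[OF y_subgrad])

lemma beta_sum_pos: "0 < (\<Sum>k=1..N. beta k)"
  using N pos by (intro sum_pos) auto

lemma xbar_mem: "wavg beta N (xhat T x xin) \<in> X"
  using N pos xhat_mem by (intro wavg_mem[OF convex_X]) auto

lemma ybar_mem: "wavg beta N y \<in> conj_dom ft"
  using N pos y_mem by (intro wavg_mem[OF convex_conj]) auto

lemma y_cross_le:
  assumes k: "k \<in> {2..N}"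
  shows "beta (k - 1) * inner (dx (k - 1)) (y k - y (k - 1))
    \<le> beta k * tau k * W (y (k - 1)) (y k) + beta (k - 1) * p (k - 1) / 2 * (nx (dx (k - 1)))\<^sup>2"
proof (rule inner_le_conj_breg[where f' = fs', OF norm_x ft_convex ft_grad ft_lip y_subgrad y_mem])
  have k1: "k \<in> {1..N}" and k': "k - 1 \<in> {1..N}" using k by auto
  then show "k - 1 \<le> N" "k \<le> N" "0 \<le> beta (k - 1)" "0 \<le> beta k * tau k" "0 \<le> beta (k - 1) * p (k - 1)"
    using pos[OF k1] pos[OF k'] by auto
  have lam: "beta (k - 1) = beta k * lam k" and L: "L * lam k \<le> p (k - 1) * tau k"
    using cond_i[OF k] by blast+
  have "(beta (k - 1))\<^sup>2 * L = beta (k - 1) * beta k * (L * lam k)"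
    using lam by (simp add: power2_eq_square algebra_simps)
  also have "\<dots> \<le> beta (k - 1) * beta k * (p (k - 1) * tau k)"
    using L pos[OF k1] pos[OF k'] by (intro mult_left_mono) auto
  finally show "(beta (k - 1))\<^sup>2 * L \<le> beta k * tau k * (beta (k - 1) * p (k - 1))"
    by (simp add: algebra_simps)
qed

end

locale pds_spp_gap = pds_spp_run +
  fixes xx :: 'a and yy :: 'a and zz :: 'b
  assumes xx: "xx \<in> X" and yy: "yy \<in> conj_dom ft" and zz: "zz \<in> Z"
begin

definition coupling :: "nat \<Rightarrow> nat \<Rightarrow> real" where
  "coupling k s = inner (A (xin k s - xin_prev k s)) (zin k s - zz)"

definition inner_gap :: "nat \<Rightarrow> nat \<Rightarrow> real" where
  "inner_gap k t = gapQ A mu nu ft h (xin k t) (y k) (zin k t) xx (y k) zz"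

definition y_gap :: "nat \<Rightarrow> real" where
  "y_gap k = conj ft (y k) - conj ft yy - inner (xhat T x xin k) (y k - yy)"

definition outer_gap :: "nat \<Rightarrow> real" where
  "outer_gap k = (\<Sum>t=1..T k. inner_gap k t) / real (T k) + y_gap k"

lemma inner_gap_le:
  assumes k: "k \<in> {1..N}" and t: "t \<in> {1..T k}"
  shows "inner_gap k t
    \<le> eta k t * (V (xin k (t - 1)) xx - V (xin k t) xx - V (xin k (t - 1)) (xin k t))
      + p k * (V (x (k - 1)) xx - V (xin k t) xx - V (x (k - 1)) (xin k t)) - mu * V (xin k t) xx
      + q k t * (U (zin k (t - 1)) zz - U (zin k t) zz - U (zin k (t - 1)) (zin k t))
      + alpha k t * coupling k (t - 1) - coupling k t + alpha k t * extrapolation_error k t"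
proof -
  have t1: "1 \<le> t" using t by simp
  have prev: "xin_prev k t = xin k (t - 1)" using t1 by (cases t) auto
  have x_step: "mu * nu (xin k t) - mu * nu xx + inner (xin k t - xx) (y k) + inner (A (xin k t - xx)) (zin k t)
      \<le> eta k t * (V (xin k (t - 1)) xx - V (xin k t) xx - V (xin k (t - 1)) (xin k t))
        + p k * (V (x (k - 1)) xx - V (xin k t) xx - V (x (k - 1)) (xin k t)) - mu * V (xin k t) xx"
    by (rule prox_x_three_point[OF linear_A x_opt[OF k t] xx])
  have z_step: "h (zin k t) - h zz - inner (A (util T alpha x xin k t)) (zin k t - zz)
      \<le> q k t * (U (zin k (t - 1)) zz - U (zin k t) zz - U (zin k (t - 1)) (zin k t))"
    by (rule prox_z_three_point[OF z_opt[OF k t] zz])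
  have "inner (A (util T alpha x xin k t)) (zin k t - zz) - inner (A (xin k t)) (zin k t - zz)
      = - coupling k t + alpha k t * coupling k (t - 1) + alpha k t * extrapolation_error k t"
    unfolding util_eq[OF t1] coupling_def extrapolation_error_def prev
    by (simp add: linear_add[OF linear_A] linear_diff[OF linear_A] linear_cmul[OF linear_A]
        inner_diff_left inner_diff_right inner_add_left algebra_simps)
  then show ?thesis using x_step z_step unfolding inner_gap_def gapQ_def Lag_def
    by (simp add: linear_diff[OF linear_A] inner_diff_left inner_diff_right algebra_simps)
qed

definition inner_potential :: "nat \<Rightarrow> nat \<Rightarrow> real" where
  "inner_potential k m = (eta k 1 + real m * p k) * V (x (k - 1)) xx - (mu + eta k m + p k) * V (xin k m) xx
     - p k * (\<Sum>t=1..m. V (x (k - 1)) (xin k t)) + q k 1 * U (z (k - 1)) zz - q k m * U (zin k m) zz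
     + alpha k 1 * coupling k 0 - coupling k m - eta k m * V (xin_prev k m) (xin k m)
     + (alpha k 1 * extrapolation_error k 1 - q k 1 * U (zin k 0) (zin k 1))"

lemma inner_loop_bound:
  assumes k: "k \<in> {1..N}"
  shows "(\<Sum>t=1..T k. inner_gap k t) \<le> inner_potential k (T k)"
proof (rule sum_le_telescope[OF T_pos[OF k]])
  show "inner_gap k 1 \<le> inner_potential k 1"
    using inner_gap_le[OF k, of 1] T_pos[OF k] xin_0[OF k] zin_0[OF k]
    unfolding inner_potential_def by (simp add: algebra_simps)
next
  fix t assume t: "t \<in> {2..T k}"
  then obtain s where ts: "t = Suc s" and s: "s \<in> {1..T k}" by (cases t) auto
  have cond: "alpha k t = 1" "q k t \<le> q k s" "eta k t \<le> mu + eta k s + p k"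
    using cond_ii[OF k t] unfolding ts by auto
  have "eta k t * V (xin k s) xx \<le> (mu + eta k s + p k) * V (xin k s) xx"
    using s by (intro mult_right_mono cond(3) breg_nonneg[where g' = nu', OF xin_subgrad[OF k] xx]) auto
  moreover have "q k t * U (zin k s) zz \<le> q k s * U (zin k s) zz"
    using s by (intro mult_right_mono cond(2) breg_nonneg[where g' = zeta', OF zin_subgrad[OF k] zz]) auto
  ultimately show "inner_gap k t \<le> inner_potential k t - inner_potential k (t - 1)"
    using inner_gap_le[OF k, of t] extrapolation_error_le[OF k t] cond(1) t s
    unfolding inner_potential_def ts by (simp add: algebra_simps)
qed

lemma y_gap_le:
  assumes k: "k \<in> {1..N}"
  shows "y_gap k \<le> tau k * (W (y (k - 1)) yy - W (y k) yy - W (y (k - 1)) (y k)) - W (y k) yy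
      + lam k * (inner (dx (k - 1)) (y (k - 1) - yy) + inner (dx (k - 1)) (y k - y (k - 1)))
      - inner (dx k) (y k - yy)"
proof -
  have y_step: "conj ft (y k) - conj ft yy - inner (xtil T lam x xin k) (y k - yy)
      \<le> tau k * (W (y (k - 1)) yy - W (y k) yy - W (y (k - 1)) (y k)) - W (y k) yy"
    by (rule prox_y_three_point[OF y_opt[OF k] yy])
  have "xtil T lam x xin k = x (k - 1) + lam k *\<^sub>R dx (k - 1)"
    unfolding xtil_def dx_def by (simp add: diff_diff_add numeral_2_eq_2)
  moreover have "xhat T x xin k = dx k + x (k - 1)" by (simp add: dx_def)
  ultimately have "inner (xtil T lam x xin k) (y k - yy) - inner (xhat T x xin k) (y k - yy)
      = lam k * (inner (dx (k - 1)) (y (k - 1) - yy) + inner (dx (k - 1)) (y k - y (k - 1)))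
        - inner (dx k) (y k - yy)"
    by (simp add: inner_add_left inner_diff_right algebra_simps)
  then show ?thesis using y_step unfolding y_gap_def by linarith
qed

text \<open>What outer iteration \<open>k\<close> passes on to iteration \<open>k + 1\<close>, and what it receives
  from iteration \<open>k - 1\<close>.\<close>

definition residual :: "nat \<Rightarrow> real" where
  "residual k = beta k / real (T k) * (mu + eta k (T k) + p k) * V (x k) xx
     + beta k / real (T k) * q k (T k) * U (z k) zz + beta k / real (T k) * coupling k (T k)
     + beta k / real (T k) * eta k (T k) * V (xin_prev k (T k)) (x k)
     + beta k * (tau k + 1) * W (y k) yy + beta k * inner (dx k) (y k - yy)
     + beta k * p k / 2 * (nx (dx k))\<^sup>2"

definition incoming :: "nat \<Rightarrow> real" where
  "incoming k = beta k / real (T k) * (eta k 1 + real (T k) * p k) * V (x (k - 1)) xx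
     + beta k / real (T k) * q k 1 * U (z (k - 1)) zz + beta k / real (T k) * alpha k 1 * coupling k 0
     + beta k / real (T k) * (alpha k 1 * extrapolation_error k 1 - q k 1 * U (zin k 0) (zin k 1))
     + beta k * tau k * W (y (k - 1)) yy - beta k * tau k * W (y (k - 1)) (y k)
     + beta k * lam k * inner (dx (k - 1)) (y (k - 1) - yy)
     + beta k * lam k * inner (dx (k - 1)) (y k - y (k - 1))"

lemma outer_gap_le:
  assumes k: "k \<in> {1..N}"
  shows "beta k * outer_gap k \<le> incoming k - residual k"
proof -
  define c where "c = beta k / real (T k)"
  define G where "G = (\<Sum>t=1..T k. V (x (k - 1)) (xin k t))"
  have T: "0 < real (T k)" and beta: "0 < beta k" and "0 \<le> p k" using pos[OF k] by auto
  then have "0 < c" unfolding c_def by simp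
  have split: "beta k * outer_gap k = c * (\<Sum>t=1..T k. inner_gap k t) + beta k * y_gap k"
    unfolding outer_gap_def c_def using T by (simp add: field_simps)
  have "c * (\<Sum>t=1..T k. inner_gap k t) \<le> c * inner_potential k (T k)"
    using inner_loop_bound[OF k] \<open>0 < c\<close> by simp
  moreover have "beta k * y_gap k \<le> beta k * (tau k * (W (y (k - 1)) yy - W (y k) yy - W (y (k - 1)) (y k))
      - W (y k) yy + lam k * (inner (dx (k - 1)) (y (k - 1) - yy) + inner (dx (k - 1)) (y k - y (k - 1)))
      - inner (dx k) (y k - yy))"
    using y_gap_le[OF k] beta by simp
  moreover have "beta k * p k * ((nx (dx k))\<^sup>2 / 2) \<le> beta k * p k * (G / real (T k))"
    using dx_sq_le[OF k] beta \<open>0 \<le> p k\<close> unfolding G_def by (intro mult_left_mono) auto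
  moreover have "c * inner_potential k (T k) + beta k * (tau k * (W (y (k - 1)) yy - W (y k) yy
      - W (y (k - 1)) (y k)) - W (y k) yy + lam k * (inner (dx (k - 1)) (y (k - 1) - yy)
      + inner (dx (k - 1)) (y k - y (k - 1))) - inner (dx k) (y k - yy))
      = incoming k - residual k - beta k * p k * (G / real (T k)) + beta k * p k * ((nx (dx k))\<^sup>2 / 2)"
    unfolding inner_potential_def incoming_def residual_def c_def G_def
    using x_last[OF k] z_last[OF k] T by (simp add: algebra_simps)
  ultimately show ?thesis unfolding split by linarith
qed

lemma incoming_first:
  "incoming 1 \<le> beta 1 * (q 1 1 / real (T 1) * U (z 0) zz + (eta 1 1 / real (T 1) + p 1) * V (x 0) xx)"
proof -
  have k: "1 \<in> {1..N}" using N by simp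
  have "coupling 1 0 = 0" using xin_0[OF k] linear_0[OF linear_A] by (simp add: coupling_def xin_prev_def)
  then have "incoming 1 = beta 1 * (q 1 1 / real (T 1) * U (z 0) zz + (eta 1 1 / real (T 1) + p 1) * V (x 0) xx)
      - beta 1 / real (T 1) * (q 1 1 * U (zin 1 0) (zin 1 1))"
    using pos[OF k] cond_iii(1) extrapolation_error_first_1 dx_0
    unfolding incoming_def by (simp add: field_simps)
  moreover have "0 \<le> beta 1 / real (T 1) * (q 1 1 * U (zin 1 0) (zin 1 1))"
    using pos[OF k] pos_t[OF k, of 1] T_pos[OF k]
      breg_nonneg[where g' = zeta', OF zin_subgrad[OF k, of 0] is_subgrad_on_mem[OF zin_subgrad[OF k, of 1]]]
    by simp
  ultimately show ?thesis by linarith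
qed

lemma incoming_le_residual:
  assumes k: "k \<in> {2..N}"
  shows "incoming k \<le> residual (k - 1)"
proof -
  have k1: "k \<in> {1..N}" and k': "k - 1 \<in> {1..N}" using k by auto
  have tau_c: "beta k * tau k \<le> beta (k - 1) * (tau (k - 1) + 1)"
    and lam: "beta (k - 1) = beta k * lam k"
    and alpha_c: "beta k * real (T (k - 1)) * alpha k 1 = beta (k - 1) * real (T k)"
    and q_c: "beta k * real (T (k - 1)) * q k 1 \<le> beta (k - 1) * real (T k) * q (k - 1) (T (k - 1))"
    and eta_c: "beta k * real (T (k - 1)) * (eta k 1 + p k * real (T k))
           \<le> beta (k - 1) * real (T k) * (mu + eta (k - 1) (T (k - 1)) + p (k - 1))"
    using cond_i[OF k] by blast+
  have T: "0 < real (T k)" "0 < real (T (k - 1))" using pos[OF k1] pos[OF k'] by auto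
  have beta: "0 < beta k" "0 < beta (k - 1)" using pos[OF k1] pos[OF k'] by auto
  have x_prev: "xin (k - 1) (T (k - 1)) = x (k - 1)" using x_last[OF k'] by simp
  have "beta k / real (T k) * (eta k 1 + real (T k) * p k)
      \<le> beta (k - 1) / real (T (k - 1)) * (mu + eta (k - 1) (T (k - 1)) + p (k - 1))"
    using eta_c T by (simp add: field_simps)
  then have V_term: "beta k / real (T k) * (eta k 1 + real (T k) * p k) * V (x (k - 1)) xx
      \<le> beta (k - 1) / real (T (k - 1)) * (mu + eta (k - 1) (T (k - 1)) + p (k - 1)) * V (x (k - 1)) xx"
    using k by (intro mult_right_mono breg_nonneg[where g' = nu', OF x_subgrad xx]) auto
  have "beta k / real (T k) * q k 1 \<le> beta (k - 1) / real (T (k - 1)) * q (k - 1) (T (k - 1))"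
    using q_c T by (simp add: field_simps)
  then have U_term: "beta k / real (T k) * q k 1 * U (z (k - 1)) zz
      \<le> beta (k - 1) / real (T (k - 1)) * q (k - 1) (T (k - 1)) * U (z (k - 1)) zz"
    using k by (intro mult_right_mono breg_nonneg[where g' = zeta', OF z_subgrad zz]) auto
  have alpha: "beta k / real (T k) * alpha k 1 = beta (k - 1) / real (T (k - 1))"
    using alpha_c T by (simp add: field_simps)
  then have coupling_term: "beta k / real (T k) * alpha k 1 * coupling k 0
      = beta (k - 1) / real (T (k - 1)) * coupling (k - 1) (T (k - 1))"
    using xin_prev_0[OF k] by (simp add: coupling_def)
  have "beta k / real (T k) * (alpha k 1 * extrapolation_error k 1 - q k 1 * U (zin k 0) (zin k 1))
      \<le> beta k / real (T k) * (alpha k 1 * eta (k - 1) (T (k - 1))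
          * V (xin_prev (k - 1) (T (k - 1))) (xin (k - 1) (T (k - 1))))"
    using extrapolation_error_first_le[OF k] T beta by (intro mult_left_mono) auto
  then have error_term: "beta k / real (T k) * (alpha k 1 * extrapolation_error k 1 - q k 1 * U (zin k 0) (zin k 1))
      \<le> beta (k - 1) / real (T (k - 1)) * eta (k - 1) (T (k - 1)) * V (xin_prev (k - 1) (T (k - 1))) (x (k - 1))"
    unfolding x_prev by (metis alpha mult.assoc)
  have W_term: "beta k * tau k * W (y (k - 1)) yy \<le> beta (k - 1) * (tau (k - 1) + 1) * W (y (k - 1)) yy"
    using tau_c k by (intro mult_right_mono breg_nonneg[where g' = fs', OF y_subgrad yy]) auto
  show ?thesis
    using V_term U_term coupling_term error_term W_term y_cross_le[OF k]
    unfolding incoming_def residual_def lam[symmetric] by linarith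
qed

lemma residual_nonneg: "0 \<le> residual N"
proof -
  have k: "N \<in> {1..N}" using N by simp
  have T: "0 < real (T N)" and beta: "0 < beta N" and "0 < p N" "0 \<le> tau N" using pos[OF k] by auto
  have eta_q: "0 < eta N (T N)" "0 < q N (T N)" using pos_t[OF k, of "T N"] T_pos[OF k] by auto
  have "1 * inner (A (x N - xin_prev N (T N))) (zz - z N)
      \<le> eta N (T N) * V (xin_prev N (T N)) (x N) + q N (T N) * U (z N) zz"
  proof (rule inner_op_le_breg[OF norm_x norm_z linear_A convex_X nu_strongly_convex convex_Z
        zeta_strongly_convex])
    show "is_subgrad_on nu X (xin_prev N (T N)) (nu' (xin_prev N (T N)))" by (rule xin_prev_subgrad[OF k]) simp
    show "x N \<in> X" by (rule is_subgrad_on_mem[OF x_subgrad]) simp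
    show "is_subgrad_on zeta Z (z N) (zeta' (z N))" by (rule z_subgrad) simp
  qed (use zz eta_q cond_iii(3) in simp_all)
  then have "0 \<le> beta N / real (T N) * (q N (T N) * U (z N) zz + coupling N (T N)
      + eta N (T N) * V (xin_prev N (T N)) (x N))"
    using T beta x_last[OF k] z_last[OF k]
    by (intro mult_nonneg_nonneg) (auto simp: coupling_def inner_diff_right)
  moreover have "1 * inner (dx N) (yy - y N) \<le> (1 + tau N) * W (y N) yy + p N / 2 * (nx (dx N))\<^sup>2"
    using cond_iii(2) \<open>0 < p N\<close> \<open>0 \<le> tau N\<close>
    by (intro inner_le_conj_breg[where f' = fs', OF norm_x ft_convex ft_grad ft_lip y_subgrad yy]) (auto simp: algebra_simps)
  then have "0 \<le> beta N * ((tau N + 1) * W (y N) yy + inner (dx N) (y N - yy) + p N / 2 * (nx (dx N))\<^sup>2)"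
    using beta by (intro mult_nonneg_nonneg) (auto simp: inner_diff_right algebra_simps)
  moreover have "0 \<le> beta N / real (T N) * (mu + eta N (T N) + p N) * V (x N) xx"
    using T beta eta_q \<open>0 < p N\<close> mu_nonneg breg_nonneg[where g' = nu', OF x_subgrad xx] by simp
  ultimately show ?thesis unfolding residual_def by (simp add: algebra_simps)
qed

lemma outer_sum_bound:
  "(\<Sum>k=1..N. beta k * outer_gap k)
    \<le> beta 1 * (q 1 1 / real (T 1) * U (z 0) zz + (eta 1 1 / real (T 1) + p 1) * V (x 0) xx)"
  (is "_ \<le> ?B")
proof -
  have "(\<Sum>k=1..N. beta k * outer_gap k) \<le> ?B - residual N"
  proof (rule sum_le_telescope[OF N])
    show "beta 1 * outer_gap 1 \<le> ?B - residual 1"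
      using outer_gap_le[of 1] incoming_first N by simp
    show "beta k * outer_gap k \<le> (?B - residual k) - (?B - residual (k - 1))" if "k \<in> {2..N}" for k
      using outer_gap_le[of k] incoming_le_residual[OF that] that by simp
  qed
  then show ?thesis using residual_nonneg by simp
qed

abbreviation gap_at :: "'a \<times> 'a \<times> 'b \<Rightarrow> real" where
  "gap_at \<equiv> \<lambda>(a, b, c). gapQ A mu nu ft h a b c xx yy zz"

lemma outer_gap_eq_average:
  assumes k: "k \<in> {1..N}"
  shows "outer_gap k = (1 / real (T k)) * (\<Sum>t=1..T k. gap_at (xin k t, y k, zin k t))"
proof -
  have "gap_at (xin k t, y k, zin k t)
      = inner_gap k t + (conj ft (y k) - conj ft yy) - inner (xin k t) (y k - yy)" for t
    unfolding inner_gap_def gapQ_def Lag_def by (simp add: inner_diff_right)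
  then have "(\<Sum>t=1..T k. gap_at (xin k t, y k, zin k t))
      = (\<Sum>t=1..T k. inner_gap k t) + real (T k) * (conj ft (y k) - conj ft yy)
        - inner (\<Sum>t=1..T k. xin k t) (y k - yy)"
    by (simp add: sum.distrib sum_subtractf inner_sum_left)
  moreover have "0 < real (T k)" using pos[OF k] by simp
  ultimately show ?thesis using k unfolding outer_gap_def y_gap_def xhat_def by (simp add: field_simps)
qed

lemma gap_le_outer_average:
  "gapQ A mu nu ft h (wavg beta N (xhat T x xin)) (wavg beta N y) (wavg beta N (zhat T zin)) xx yy zz
    \<le> (1 / (\<Sum>k=1..N. beta k)) * (\<Sum>k=1..N. beta k * outer_gap k)"
proof -
  define C where "C = X \<times> conj_dom ft \<times> Z"
  have convex: "convex_on C gap_at" unfolding C_def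
    by (intro convex_on_gapQ convex_h mu_nonneg linear_A
        strongly_convex_imp_convex_on[OF convex_X _ nu_strongly_convex]) simp
  have "convex C" using convex by (simp add: convex_on_def)
  have iterate_mem: "(xin k t, y k, zin k t) \<in> C" if "k \<in> {1..N}" "t \<in> {1..T k}" for k t
    using that is_subgrad_on_mem[OF xin_subgrad] is_subgrad_on_mem[OF zin_subgrad] y_mem
    unfolding C_def by auto
  have inner_jensen: "gap_at (xhat T x xin k, y k, zhat T zin k) \<le> outer_gap k" if k: "k \<in> {1..N}" for k
  proof -
    have "(xhat T x xin k, y k, zhat T zin k) = wavg (\<lambda>_. 1) (T k) (\<lambda>t. (xin k t, y k, zin k t))"
      using k T_pos[OF k] by (simp add: wavg_Pair wavg_const xhat_eq_wavg zhat_eq_wavg)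
    also have "gap_at \<dots> \<le> (1 / (\<Sum>t=1..T k. 1 :: real)) * (\<Sum>t=1..T k. 1 * gap_at (xin k t, y k, zin k t))"
      by (rule convex_on_wavg_le[OF \<open>convex C\<close> T_pos[OF k] iterate_mem[OF k] _ convex]) simp_all
    also have "\<dots> = (1 / real (T k)) * (\<Sum>t=1..T k. gap_at (xin k t, y k, zin k t))" by simp
    finally show ?thesis unfolding outer_gap_eq_average[OF k] .
  qed
  have "gap_at (wavg beta N (\<lambda>k. (xhat T x xin k, y k, zhat T zin k)))
      \<le> (1 / (\<Sum>k=1..N. beta k)) * (\<Sum>k=1..N. beta k * gap_at (xhat T x xin k, y k, zhat T zin k))"
    using xhat_mem y_mem zhat_mem pos unfolding C_def
    by (intro convex_on_wavg_le[OF \<open>convex C\<close>[unfolded C_def] N] convex[unfolded C_def]) auto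
  also have "\<dots> \<le> (1 / (\<Sum>k=1..N. beta k)) * (\<Sum>k=1..N. beta k * outer_gap k)"
    using beta_sum_pos pos inner_jensen
    by (intro mult_left_mono sum_mono) (auto intro: mult_left_mono less_imp_le)
  finally show ?thesis by (simp add: wavg_Pair)
qed

lemma ergodic_gap_le:
  "gapQ A mu nu ft h (wavg beta N (xhat T x xin)) (wavg beta N y) (wavg beta N (zhat T zin)) xx yy zz
    \<le> (1 / (\<Sum>k=1..N. beta k)) * beta 1 *
        (q 1 1 / real (T 1) * U (z 0) zz + (eta 1 1 / real (T 1) + p 1) * V (x 0) xx)"
  using gap_le_outer_average mult_left_mono[OF outer_sum_bound, of "1 / (\<Sum>k=1..N. beta k)"]
    beta_sum_pos by (simp add: mult.assoc)

end

lemma (in pds_spp_run) ergodic_gap_bound: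
  assumes "xx \<in> X" "yy \<in> conj_dom ft" "zz \<in> Z"
  shows "gapQ A mu nu ft h (wavg beta N (xhat T x xin)) (wavg beta N y) (wavg beta N (zhat T zin)) xx yy zz
    \<le> (1 / (\<Sum>k=1..N. beta k)) * beta 1 *
        (q 1 1 / real (T 1) * U (z 0) zz + (eta 1 1 / real (T 1) + p 1) * V (x 0) xx)"
proof -
  interpret pds_spp_gap X Z nx nz A h mu nu nu' ft gft L fs' zeta zeta' T beta p lam tau q eta alpha N
    x y z xin zin xx yy zz
    using assms by unfold_locales
  show ?thesis by (rule ergodic_gap_le)
qed

lemma (in pds_spp_run) linearly_constrained_rates:
  assumes H: "Z = UNIV \<and> nz = norm \<and> (\<forall>a c. U a c = (norm (c - a))\<^sup>2 / 2)
      \<and> (\<forall>v. h v = inner b v) \<and> z 0 = 0 \<and> xs \<in> X \<and> ys \<in> conj_dom ft \<and> zs \<in> Z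
      \<and> (\<forall>xx\<in>X. \<forall>yy\<in>conj_dom ft. \<forall>zz\<in>Z.
            Lag A mu nu ft h xs yy zz \<le> Lag A mu nu ft h xs ys zs
          \<and> Lag A mu nu ft h xs ys zs \<le> Lag A mu nu ft h xx ys zs)"
  shows "ft (wavg beta N (xhat T x xin)) + mu * nu (wavg beta N (xhat T x xin)) - (ft xs + mu * nu xs)
      \<le> (1 / (\<Sum>k=1..N. beta k)) * beta 1 * (eta 1 1 / real (T 1) + p 1) * V (x 0) xs"
    and "norm (A (wavg beta N (xhat T x xin)) - b)
      \<le> (1 / (\<Sum>k=1..N. beta k)) * beta 1 *
          (q 1 1 / (2 * real (T 1)) * (norm zs + 1)\<^sup>2 + (eta 1 1 / real (T 1) + p 1) * V (x 0) xs)"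
proof -
  define B where "B = (1 / (\<Sum>k=1..N. beta k)) * beta 1"
  have "0 \<le> B" unfolding B_def using beta_sum_pos pos[of 1] N by simp
  have "0 \<le> q 1 1 / real (T 1)" using pos_t[of 1 1] pos[of 1] N by (simp add: less_imp_le)
  have h: "h = inner b" using H by auto
  have U: "\<And>a c. U a c = (norm (c - a))\<^sup>2 / 2" and "z 0 = 0" "Z = UNIV" "xs \<in> X" "ys \<in> conj_dom ft"
    and max: "\<And>yy zz. yy \<in> conj_dom ft \<Longrightarrow> Lag A mu nu ft (inner b) xs yy zz \<le> Lag A mu nu ft (inner b) xs ys zs"
    and min: "\<And>xx. xx \<in> X \<Longrightarrow> Lag A mu nu ft (inner b) xs ys zs \<le> Lag A mu nu ft (inner b) xx ys zs"
    using H unfolding h by auto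
  have "gapQ A mu nu ft (inner b) (wavg beta N (xhat T x xin)) (wavg beta N y) (wavg beta N (zhat T zin))
      xs (gft (wavg beta N (xhat T x xin))) zz
    \<le> B * (q 1 1 / real (T 1) * ((norm zz)\<^sup>2 / 2) + (eta 1 1 / real (T 1) + p 1) * V (x 0) xs)" for zz
    using ergodic_gap_bound[OF \<open>xs \<in> X\<close> gradient_in_conj_dom[OF ft_convex ft_grad], of zz]
      U[of 0 zz] \<open>z 0 = 0\<close> \<open>Z = UNIV\<close> unfolding h B_def by simp
  note rates = saddle_point_rates[OF ft_convex ft_grad this xbar_mem ybar_mem \<open>ys \<in> conj_dom ft\<close>
      max min \<open>0 \<le> B\<close> \<open>0 \<le> q 1 1 / real (T 1)\<close>]
  have "q 1 1 / real (T 1) / 2 = q 1 1 / (2 * real (T 1))" by simp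
  then show "ft (wavg beta N (xhat T x xin)) + mu * nu (wavg beta N (xhat T x xin)) - (ft xs + mu * nu xs)
      \<le> (1 / (\<Sum>k=1..N. beta k)) * beta 1 * (eta 1 1 / real (T 1) + p 1) * V (x 0) xs"
    and "norm (A (wavg beta N (xhat T x xin)) - b)
      \<le> (1 / (\<Sum>k=1..N. beta k)) * beta 1 *
          (q 1 1 / (2 * real (T 1)) * (norm zs + 1)\<^sup>2 + (eta 1 1 / real (T 1) + p 1) * V (x 0) xs)"
    using rates unfolding B_def by (simp_all only: mult.assoc)
qed

theorem proposition4p1:
  fixes X :: "'a::euclidean_space set" and Z :: "'b::euclidean_space set"
    and nx :: "'a \<Rightarrow> real" and nz :: "'b \<Rightarrow> real"
    and A :: "'a \<Rightarrow> 'b" and h :: "'b \<Rightarrow> real"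
    and mu :: real and nu :: "'a \<Rightarrow> real" and nu' :: "'a \<Rightarrow> 'a"
    and ft :: "'a \<Rightarrow> real" and gft :: "'a \<Rightarrow> 'a" and L :: real and fs' :: "'a \<Rightarrow> 'a"
    and zeta :: "'b \<Rightarrow> real" and zeta' :: "'b \<Rightarrow> 'b"
    and T :: "nat \<Rightarrow> nat" and beta p lam tau :: "nat \<Rightarrow> real"
    and q eta alpha :: "nat \<Rightarrow> nat \<Rightarrow> real" and N :: nat
    and x y :: "nat \<Rightarrow> 'a" and z :: "nat \<Rightarrow> 'b"
    and xin :: "nat \<Rightarrow> nat \<Rightarrow> 'a" and zin :: "nat \<Rightarrow> nat \<Rightarrow> 'b"
  assumes X: "closed X" "convex X" "X \<noteq> {}"
    and Z: "closed Z" "convex Z" "Z \<noteq> {}"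
    and norms: "is_norm nx" "is_norm nz"
    and A: "linear A"
    and h: "convex_on Z h"
    and mu: "0 \<le> mu"
    and nu: "strongly_convex_wrt 1 nx X nu"
    and ft_cvx: "convex_on UNIV ft"
    and ft_grad: "\<And>u. (ft has_derivative (\<lambda>d. inner (gft u) d)) (at u)"
    and ft_lip: "\<And>u v. dual_norm nx (gft u - gft v) \<le> L * nx (u - v)"
    and zeta: "strongly_convex_wrt 1 nz Z zeta"
    and N: "1 \<le> N"
    and pos: "\<And>k. k \<in> {1..N} \<Longrightarrow> 0 < T k \<and> 0 < beta k \<and> 0 < p k \<and> 0 \<le> lam k \<and> 0 \<le> tau k"
    and pos_t: "\<And>k t. k \<in> {1..N} \<Longrightarrow> t \<in> {1..T k} \<Longrightarrow> 0 < q k t \<and> 0 < eta k t \<and> 0 \<le> alpha k t"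
    and cond_i: "\<And>k. k \<in> {2..N} \<Longrightarrow>
         beta k * tau k \<le> beta (k - 1) * (tau (k - 1) + 1)
       \<and> beta (k - 1) = beta k * lam k
       \<and> L * lam k \<le> p (k - 1) * tau k
       \<and> beta k * real (T (k - 1)) * alpha k 1 = beta (k - 1) * real (T k)
       \<and> alpha k 1 * (op_norm nx nz A)\<^sup>2 \<le> eta (k - 1) (T (k - 1)) * q k 1
       \<and> beta k * real (T (k - 1)) * q k 1 \<le> beta (k - 1) * real (T k) * q (k - 1) (T (k - 1))
       \<and> beta k * real (T (k - 1)) * (eta k 1 + p k * real (T k))
           \<le> beta (k - 1) * real (T k) * (mu + eta (k - 1) (T (k - 1)) + p (k - 1))"
    and cond_ii: "\<And>k t. k \<in> {1..N} \<Longrightarrow> t \<in> {2..T k} \<Longrightarrow>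
         alpha k t = 1
       \<and> (op_norm nx nz A)\<^sup>2 \<le> eta k (t - 1) * q k t
       \<and> q k t \<le> q k (t - 1)
       \<and> eta k t \<le> mu + eta k (t - 1) + p k"
    and cond_iii: "tau 1 = 0" "L \<le> p N * (tau N + 1)" "(op_norm nx nz A)\<^sup>2 \<le> eta N (T N) * q N (T N)"
    and init: "x 0 \<in> X" "y 0 \<in> conj_dom ft" "z 0 \<in> Z"
    and alg: "pds_spp X Z A mu nu nu' ft fs' h zeta zeta' T lam tau alpha q eta p N x y z xin zin"
    and sg: "pds_subgrad_convention X Z A mu nu nu' ft fs' h zeta zeta' T lam tau alpha q eta p N x y z xin zin"
  shows "(\<forall>xx\<in>X. \<forall>yy\<in>conj_dom ft. \<forall>zz\<in>Z.
           gapQ A mu nu ft h (wavg beta N (xhat T x xin)) (wavg beta N y) (wavg beta N (zhat T zin)) xx yy zz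
           \<le> (1 / (\<Sum>k=1..N. beta k)) * beta 1 *
               (q 1 1 / real (T 1) * breg zeta zeta' (z 0) zz
                + (eta 1 1 / real (T 1) + p 1) * breg nu nu' (x 0) xx))
       \<and> (\<forall>b xs ys zs.
           (Z = UNIV \<and> nz = norm \<and> (\<forall>a c. breg zeta zeta' a c = (norm (c - a))\<^sup>2 / 2)
            \<and> (\<forall>v. h v = inner b v) \<and> z 0 = 0
            \<and> xs \<in> X \<and> ys \<in> conj_dom ft \<and> zs \<in> Z
            \<and> (\<forall>xx\<in>X. \<forall>yy\<in>conj_dom ft. \<forall>zz\<in>Z.
                  Lag A mu nu ft h xs yy zz \<le> Lag A mu nu ft h xs ys zs
                \<and> Lag A mu nu ft h xs ys zs \<le> Lag A mu nu ft h xx ys zs))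
           \<longrightarrow> (ft (wavg beta N (xhat T x xin)) + mu * nu (wavg beta N (xhat T x xin)) - (ft xs + mu * nu xs)
                  \<le> (1 / (\<Sum>k=1..N. beta k)) * beta 1 * (eta 1 1 / real (T 1) + p 1) * breg nu nu' (x 0) xs)
             \<and> norm (A (wavg beta N (xhat T x xin)) - b)
                  \<le> (1 / (\<Sum>k=1..N. beta k)) * beta 1 *
                      (q 1 1 / (2 * real (T 1)) * (norm zs + 1)\<^sup>2
                       + (eta 1 1 / real (T 1) + p 1) * breg nu nu' (x 0) xs))"
proof -
  interpret pds_spp_run X Z nx nz A h mu nu nu' ft gft L fs' zeta zeta' T beta p lam tau q eta alpha N
    x y z xin zin
    by (rule pds_spp_run.intro[OF X(2) Z(2) norms A h mu nu ft_cvx ft_grad ft_lip zeta N pos pos_t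
          cond_i cond_ii cond_iii alg sg])
  show ?thesis using ergodic_gap_bound linearly_constrained_rates by blast
qed

end
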